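(* Let $L\ge 2$ and let the loss $\ell$ satisfy Assumption 1. Let $W(t)=(W_L(t),\dots,W_1(t))$, $t\ge 0$, be a gradient flow trajectory whose initialization satisfies Assumption 2. Then: (i) $\lim_{t\to\infty}\mathcal{R}(W(t))=0$; (ii) for every $1\le k\le L$, $\lim_{t\to\infty}\|W_k(t)\|_F=\infty$; (iii) for every $1\le k\le L$, $\lim_{t\to\infty}\left\|\frac{W_k(t)}{\|W_k(t)\|_F}-u_k(t)v_k(t)^\top\right\|_F=0$; for every $1\le k<L$, $\lim_{t\to\infty}|\langle v_{k+1}(t),u_k(t)\rangle|=1$; consequently $$\lim_{t\to\infty}\left|\left\langle \frac{w_{\mathrm{prod}}(t)}{\prod_{k=1}^L\|W_k(t)\|_F},\,v_1(t)\right\rangle\right|=1,$$ and $\lim_{t\to\infty}\|w_{\mathrm{prod}}(t)\|=\infty$.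
   Context: Setting: data $(x_i,y_i)_{i=1}^n$ with $x_i\in\mathbb{R}^d$, $\|x_i\|\le 1$, $y_i\in\{-1,+1\}$; put $z_i:=y_ix_i$. The data are linearly separable, i.e. some unit vector $u$ has $\langle u,z_i\rangle>0$ for all $i$. Let $\gamma:=\max_{\|u\|=1}\min_{i}\langle u,z_i\rangle>0$ and let $\bar u$ be the unique unit vector attaining it. A depth-$L$ linear network is $W=(W_L,\dots,W_1)$ with $W_k\in\mathbb{R}^{d_k\times d_{k-1}}$, $d_0=d$, $d_L=1$, and $w_{\mathrm{prod}}:=(W_L\cdots W_1)^\top\in\mathbb{R}^d$. The risk is $\mathcal{R}(W)=\frac1n\sum_{i=1}^n\ell(\langle w_{\mathrm{prod}},z_i\rangle)$, a function of all entries of $W$; $\|\cdot\|$ on $W$ is the Euclidean norm over all entries, $\|\cdot\|_F$ the Frobenius norm, $\|\cdot\|_2$ the spectral norm. Assumption 1: $\ell:\mathbb{R}\to\mathbb{R}$ is continuously differentiable, $\ell'(x)<0$ for all $x$, $\lim_{x\to-\infty}\ell(x)=\infty$ and $\lim_{x\to\infty}\ell(x)=0$. Gradient flow: a $C^1$ curve $W(t)$, $t\in[0,\infty)$, with $\frac{d}{dt}W(t)=-\nabla\mathcal{R}(W(t))$. Assumption 2: $\nabla\mathcal{R}(W(0))\neq 0$ and $\mathcal{R}(W(0))\le \ell(0)$. For each $k$ and time $t$, $\sigma_k(t)=\|W_k(t)\|_2$ and $u_k(t),v_k(t)$ are a pair of first (top) left and right unit singular vectors of $W_k(t)$. *)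

theory Defs
  imports "HOL-Analysis.Analysis"
begin

text \<open>A depth-L linear network is represented by
  W :: nat => nat => nat => real, where W k i j is entry (i,j) of the layer
  matrix W_k (1 <= k <= L, i < dims k, j < dims (k-1)).  Vectors in R^m are
  functions nat => real read on the indices {..<m}.  Data are given by
  x :: nat => nat => real (x i j = j-th coordinate of x_i, i < n, j < dims 0)
  and labels y :: nat => real.\<close>

type_synonym net = "nat \<Rightarrow> nat \<Rightarrow> nat \<Rightarrow> real"

fun prodmat :: "(nat \<Rightarrow> nat) \<Rightarrow> net \<Rightarrow> nat \<Rightarrow> nat \<Rightarrow> nat \<Rightarrow> real" where
  "prodmat dims W 0 i j = (if i = j then 1 else 0)"
| "prodmat dims W (Suc k) i j = (\<Sum>m<dims k. W (Suc k) i m * prodmat dims W k m j)"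

text \<open>w_prod = (W_L ... W_1)^T in R^{dims 0}.\<close>
definition wprod :: "(nat \<Rightarrow> nat) \<Rightarrow> nat \<Rightarrow> net \<Rightarrow> nat \<Rightarrow> real" where
  "wprod dims L W j = prodmat dims W L 0 j"

definition zvec :: "(nat \<Rightarrow> nat \<Rightarrow> real) \<Rightarrow> (nat \<Rightarrow> real) \<Rightarrow> nat \<Rightarrow> nat \<Rightarrow> real" where
  "zvec x y i j = y i * x i j"

definition risk :: "(real \<Rightarrow> real) \<Rightarrow> nat \<Rightarrow> (nat \<Rightarrow> nat \<Rightarrow> real) \<Rightarrow> (nat \<Rightarrow> real)
    \<Rightarrow> (nat \<Rightarrow> nat) \<Rightarrow> nat \<Rightarrow> net \<Rightarrow> real" where
  "risk loss n x y dims L W =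
     (1 / real n) * (\<Sum>i<n. loss (\<Sum>j<dims 0. wprod dims L W j * zvec x y i j))"

definition upd_entry :: "net \<Rightarrow> nat \<Rightarrow> nat \<Rightarrow> nat \<Rightarrow> real \<Rightarrow> net" where
  "upd_entry W k i j c = W(k := (W k)(i := (W k i)(j := c)))"

definition grad_entry :: "(net \<Rightarrow> real) \<Rightarrow> net \<Rightarrow> nat \<Rightarrow> nat \<Rightarrow> nat \<Rightarrow> real" where
  "grad_entry F W k i j = deriv (\<lambda>s. F (upd_entry W k i j (W k i j + s))) 0"

definition frob :: "(nat \<Rightarrow> nat) \<Rightarrow> net \<Rightarrow> nat \<Rightarrow> real" where
  "frob dims W k = sqrt (\<Sum>i<dims k. \<Sum>j<dims (k - 1). (W k i j)\<^sup>2)"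

definition vnorm :: "nat \<Rightarrow> (nat \<Rightarrow> real) \<Rightarrow> real" where
  "vnorm m v = sqrt (\<Sum>i<m. (v i)\<^sup>2)"

definition vinner :: "nat \<Rightarrow> (nat \<Rightarrow> real) \<Rightarrow> (nat \<Rightarrow> real) \<Rightarrow> real" where
  "vinner m u v = (\<Sum>i<m. u i * v i)"

definition layer_mv :: "(nat \<Rightarrow> nat) \<Rightarrow> net \<Rightarrow> nat \<Rightarrow> (nat \<Rightarrow> real) \<Rightarrow> nat \<Rightarrow> real" where
  "layer_mv dims W k v i = (\<Sum>j<dims (k - 1). W k i j * v j)"

definition layer_tmv :: "(nat \<Rightarrow> nat) \<Rightarrow> net \<Rightarrow> nat \<Rightarrow> (nat \<Rightarrow> real) \<Rightarrow> nat \<Rightarrow> real" where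
  "layer_tmv dims W k u j = (\<Sum>i<dims k. W k i j * u i)"

definition specnorm :: "(nat \<Rightarrow> nat) \<Rightarrow> net \<Rightarrow> nat \<Rightarrow> real" where
  "specnorm dims W k =
     Sup {vnorm (dims k) (layer_mv dims W k v) | v. vnorm (dims (k - 1)) v \<le> 1}"

definition top_sing_pair :: "(nat \<Rightarrow> nat) \<Rightarrow> net \<Rightarrow> nat \<Rightarrow> (nat \<Rightarrow> real) \<Rightarrow> (nat \<Rightarrow> real) \<Rightarrow> bool" where
  "top_sing_pair dims W k u v \<longleftrightarrow>
     vnorm (dims k) u = 1 \<and> vnorm (dims (k - 1)) v = 1 \<and>
     (\<forall>i<dims k. layer_mv dims W k v i = specnorm dims W k * u i) \<and>
     (\<forall>j<dims (k - 1). layer_tmv dims W k u j = specnorm dims W k * v j)"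

definition align_err :: "(nat \<Rightarrow> nat) \<Rightarrow> net \<Rightarrow> nat \<Rightarrow> (nat \<Rightarrow> real) \<Rightarrow> (nat \<Rightarrow> real) \<Rightarrow> real" where
  "align_err dims W k u v =
     sqrt (\<Sum>i<dims k. \<Sum>j<dims (k - 1). (W k i j / frob dims W k - u i * v j)\<^sup>2)"

end

theory Submission
  imports Defs
begin

text \<open>Gradient flow decreases the risk at rate \<open>\<parallel>\<nabla>R\<parallel>\<^sup>2\<close> and conserves the balancedness matrices
  \<open>W\<^sub>k\<^sub>+\<^sub>1\<^sup>T W\<^sub>k\<^sub>+\<^sub>1 - W\<^sub>k W\<^sub>k\<^sup>T\<close>. As long as the risk stays above some \<open>\<epsilon> > 0\<close>, all
  margins stay in a compact range and the separating direction bounds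
  \<open>\<parallel>W\<^sub>1\<parallel>\<^sub>F \<parallel>\<nabla>R\<parallel>\<close> from below; then \<open>ln \<parallel>W\<^sub>1\<parallel>\<^sub>F\<^sup>2 + c R\<close> is nonincreasing for a suitable \<open>c\<close>,
  so \<open>\<parallel>W\<^sub>1\<parallel>\<^sub>F\<close> stays bounded and \<open>\<parallel>\<nabla>R\<parallel>\<^sup>2\<close> is bounded away from \<open>0\<close>, which a
  nonnegative risk cannot afford. Hence \<open>R \<rightarrow> 0\<close>, every margin and \<open>\<parallel>w\<^sub>p\<^sub>r\<^sub>o\<^sub>d\<parallel>\<close> diverge,
  and since balancedness keeps the squared Frobenius norms of all layers within constants of each
  other, every \<open>\<parallel>W\<^sub>k\<parallel>\<^sub>F\<close> diverges.

  Balancedness also bounds \<open>\<parallel>W\<^sub>k\<parallel>\<^sub>F\<^sup>2 - \<sigma>\<^sub>k\<^sup>2\<close>, by induction downwards from the last layer,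
  which is a single row. So each layer is asymptotically rank one, adjacent singular vectors
  \<open>u\<^sub>k, v\<^sub>k\<^sub>+\<^sub>1\<close> align, and the normalized product \<open>w\<^sub>p\<^sub>r\<^sub>o\<^sub>d\<close> aligns with \<open>v\<^sub>1\<close>.\<close>

section \<open>Sums, square roots and monotone functions\<close>

lemma sum_indicator_mult:
  assumes "a < (N::nat)"
  shows "(\<Sum>c<N. (if c = a then 1 else 0) * f c) = (f a :: real)"
proof -
  have "(\<Sum>c<N. (if c = a then 1 else 0) * f c) = (\<Sum>c<N. if c = a then f c else 0)"
    by (rule sum.cong) auto
  then show ?thesis using assms by simp
qed

lemma sum_mult_sum3_swap:
  "(\<Sum>c\<in>C. f c * (\<Sum>m\<in>M. \<Sum>a\<in>A m. \<Sum>b\<in>B m. g c m a b)) =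
   (\<Sum>m\<in>M. \<Sum>a\<in>A m. \<Sum>b\<in>B m. \<Sum>c\<in>C. f c * (g c m a b :: real))"
proof -
  have "(\<Sum>c\<in>C. f c * (\<Sum>m\<in>M. \<Sum>a\<in>A m. \<Sum>b\<in>B m. g c m a b)) =
     (\<Sum>c\<in>C. \<Sum>m\<in>M. \<Sum>a\<in>A m. \<Sum>b\<in>B m. f c * g c m a b)"
    by (simp add: sum_distrib_left)
  also have "\<dots> = (\<Sum>m\<in>M. \<Sum>c\<in>C. \<Sum>a\<in>A m. \<Sum>b\<in>B m. f c * g c m a b)"
    by (rule sum.swap)
  also have "\<dots> = (\<Sum>m\<in>M. \<Sum>a\<in>A m. \<Sum>c\<in>C. \<Sum>b\<in>B m. f c * g c m a b)"
    by (rule sum.cong[OF refl], rule sum.swap)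
  also have "\<dots> = (\<Sum>m\<in>M. \<Sum>a\<in>A m. \<Sum>b\<in>B m. \<Sum>c\<in>C. f c * g c m a b)"
    by (rule sum.cong[OF refl], rule sum.cong[OF refl], rule sum.swap)
  finally show ?thesis .
qed

lemma sum_mult_le_sqrt_sum_squares:
  "(\<Sum>i\<in>A. a i * b i) \<le> sqrt (\<Sum>i\<in>A. (a i)\<^sup>2) * sqrt (\<Sum>i\<in>A. (b i :: real)\<^sup>2)"
proof -
  have "(\<Sum>i\<in>A. a i * b i)\<^sup>2 \<le> (\<Sum>i\<in>A. (a i)\<^sup>2) * (\<Sum>i\<in>A. (b i)\<^sup>2)"
    by (rule Cauchy_Schwarz_ineq_sum)
  then have "\<bar>\<Sum>i\<in>A. a i * b i\<bar> \<le> sqrt ((\<Sum>i\<in>A. (a i)\<^sup>2) * (\<Sum>i\<in>A. (b i)\<^sup>2))"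
    using real_le_rsqrt real_sqrt_abs by (metis real_sqrt_le_iff)
  then show ?thesis by (simp add: real_sqrt_mult)
qed

lemma double_sum_mult_le_sqrt_sum_squares:
  "(\<Sum>i\<in>A. \<Sum>j\<in>B. a i j * b i j)
     \<le> sqrt (\<Sum>i\<in>A. \<Sum>j\<in>B. (a i j)\<^sup>2) * sqrt (\<Sum>i\<in>A. \<Sum>j\<in>B. (b i j :: real)\<^sup>2)"
  using sum_mult_le_sqrt_sum_squares[of "\<lambda>p. a (fst p) (snd p)" "\<lambda>p. b (fst p) (snd p)" "A \<times> B"]
  by (simp add: sum.cartesian_product split_def)

lemma real_sqrt_prod: "sqrt (prod f A) = (\<Prod>k\<in>A. sqrt (f k))"
  by (induction A rule: infinite_finite_induct) (auto simp: real_sqrt_mult)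

lemma deriv_nonpos_imp_antimono:
  fixes f f' :: "real \<Rightarrow> real"
  assumes deriv: "\<And>t. a \<le> t \<Longrightarrow> (f has_real_derivative f' t) (at t within {a..})"
    and nonpos: "\<And>t. a < t \<Longrightarrow> f' t \<le> 0"
    and "a \<le> s" "s \<le> t"
  shows "f t \<le> f s"
proof (cases "s = t")
  case False
  then have "s < t" using assms by simp
  have "(f has_derivative (\<lambda>h. f' x * h)) (at x within {s..t})" if "s \<le> x" "x \<le> t" for x
    using DERIV_subset[OF deriv[of x]] that assms
    by (auto simp: has_field_derivative_def)
  from mvt_simple[OF \<open>s < t\<close> this] obtain z where z: "z \<in> {s<..<t}" "f t - f s = f' z * (t - s)"
    by auto
  have "f' z * (t - s) \<le> 0"
    using nonpos z(1) assms \<open>s < t\<close> by (intro mult_nonpos_nonneg) auto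
  then show ?thesis using z by simp
qed simp

text \<open>\<open>ln a + (2/K) R\<close> is a Lyapunov function: its derivative is
  \<open>a'/a - (2/K) G \<le> 2 g (K - f g) / (f K) \<le> 0\<close> with \<open>f = \<surd>a\<close>, \<open>g = \<surd>G\<close>.\<close>

lemma ln_descent_bound:
  fixes a a' R G :: "real \<Rightarrow> real"
  assumes K: "K > 0"
    and a_deriv: "\<And>t. t0 \<le> t \<Longrightarrow> (a has_real_derivative a' t) (at t within {t0..})"
    and R_deriv: "\<And>t. t0 \<le> t \<Longrightarrow> (R has_real_derivative - G t) (at t within {t0..})"
    and a_pos: "\<And>t. t0 \<le> t \<Longrightarrow> a t > 0"
    and G_nonneg: "\<And>t. t0 \<le> t \<Longrightarrow> G t \<ge> 0"
    and R_nonneg: "\<And>t. t0 \<le> t \<Longrightarrow> R t \<ge> 0"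
    and a'_le: "\<And>t. t0 \<le> t \<Longrightarrow> a' t \<le> 2 * sqrt (a t) * sqrt (G t)"
    and K_le: "\<And>t. t0 \<le> t \<Longrightarrow> K \<le> sqrt (a t) * sqrt (G t)"
    and "t0 \<le> t"
  shows "a t \<le> exp (ln (a t0) + 2 / K * R t0)"
proof -
  define \<Phi> where "\<Phi> t = ln (a t) + 2 / K * R t" for t
  have "\<Phi> t \<le> \<Phi> t0"
  proof (rule deriv_nonpos_imp_antimono[of t0 \<Phi> "\<lambda>t. inverse (a t) * a' t + 2 / K * - G t"])
    fix t assume "t0 \<le> t"
    show "(\<Phi> has_real_derivative inverse (a t) * a' t + 2 / K * - G t) (at t within {t0..})"
      unfolding \<Phi>_def using a_pos \<open>t0 \<le> t\<close>
      by (intro DERIV_add DERIV_cmult R_deriv DERIV_chain2[OF DERIV_ln a_deriv]) auto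
  next
    fix t assume "t0 < t"
    define f g where "f = sqrt (a t)" and "g = sqrt (G t)"
    have f: "f > 0" "a t = f\<^sup>2" and g: "g \<ge> 0" "G t = g\<^sup>2"
      using a_pos[of t] G_nonneg[of t] \<open>t0 < t\<close> by (auto simp: f_def g_def)
    have "inverse (a t) * a' t \<le> inverse (a t) * (2 * f * g)"
      using a'_le[of t] a_pos[of t] \<open>t0 < t\<close> unfolding f_def g_def by (intro mult_left_mono) auto
    then have "inverse (a t) * a' t + 2 / K * - G t \<le> inverse (f\<^sup>2) * (2 * f * g) - 2 / K * g\<^sup>2"
      unfolding f(2) g(2) by simp
    also have "\<dots> = 2 * g * (K - f * g) / (f * K)"
      using f K by (simp add: field_simps power2_eq_square)
    also have "\<dots> \<le> 0"
      using f g K K_le[of t] \<open>t0 < t\<close> unfolding f_def g_def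
      by (intro divide_nonpos_pos mult_nonneg_nonpos) auto
    finally show "inverse (a t) * a' t + 2 / K * - G t \<le> 0" .
  qed (use \<open>t0 \<le> t\<close> in auto)
  then have "ln (a t) \<le> ln (a t0) + 2 / K * R t0"
    using R_nonneg[of t] \<open>t0 \<le> t\<close> K unfolding \<Phi>_def by (smt (verit) divide_pos_pos mult_nonneg_nonneg)
  then show ?thesis using a_pos[of t] \<open>t0 \<le> t\<close> by (metis exp_le_cancel_iff exp_ln)
qed

lemma nonneg_no_uniform_descent:
  fixes R G :: "real \<Rightarrow> real"
  assumes "\<eta> > 0"
    and R_deriv: "\<And>t. t0 \<le> t \<Longrightarrow> (R has_real_derivative - G t) (at t within {t0..})"
    and G_ge: "\<And>t. t0 \<le> t \<Longrightarrow> \<eta> \<le> G t"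
    and R_nonneg: "\<And>t. t0 \<le> t \<Longrightarrow> R t \<ge> 0"
  shows False
proof -
  define T where "T = t0 + R t0 / \<eta> + 1"
  have T: "T \<ge> t0" unfolding T_def using R_nonneg[of t0] \<open>\<eta> > 0\<close> by simp
  have "R T + \<eta> * T \<le> R t0 + \<eta> * t0"
  proof (rule deriv_nonpos_imp_antimono[where a = t0 and f = "\<lambda>t. R t + \<eta> * t" and f' = "\<lambda>t. - G t + \<eta>"])
    fix t assume "t0 \<le> t"
    show "((\<lambda>t. R t + \<eta> * t) has_real_derivative - G t + \<eta>) (at t within {t0..})"
      using R_deriv[OF \<open>t0 \<le> t\<close>] by (auto intro!: derivative_eq_intros)
  qed (use G_ge T in auto)
  also have "R t0 + \<eta> * t0 = \<eta> * T - \<eta>"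
    unfolding T_def using \<open>\<eta> > 0\<close> by (simp add: field_simps)
  finally show False using R_nonneg[OF T] \<open>\<eta> > 0\<close> by simp
qed

section \<open>Products of layer matrices\<close>

fun segprod :: "(nat \<Rightarrow> nat) \<Rightarrow> net \<Rightarrow> nat \<Rightarrow> nat \<Rightarrow> nat \<Rightarrow> nat \<Rightarrow> real" where
  "segprod dims W k 0 i a = (if i = a then 1 else 0)"
| "segprod dims W k (Suc d) i a = (\<Sum>c<dims (k + d). W (Suc (k + d)) i c * segprod dims W k d c a)"

lemma prodmat_eq_segprod: "prodmat dims W d i j = segprod dims W 0 d i j"
  by (induction d arbitrary: i j) auto

lemma prodmat_cong:
  "(\<And>l. 1 \<le> l \<Longrightarrow> l \<le> d \<Longrightarrow> W' l = W l) \<Longrightarrow> prodmat dims W' d i j = prodmat dims W d i j"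
  by (induction d arbitrary: i j) auto

lemma segprod_Suc_0: "c < dims k \<Longrightarrow> segprod dims W k (Suc 0) a c = W (Suc k) a c"
  using sum_indicator_mult[of c "dims k" "W (Suc k) a"] by (simp add: mult.commute)

lemma prodmat_Suc_0: "j < dims 0 \<Longrightarrow> prodmat dims W (Suc 0) i j = W (Suc 0) i j"
  using segprod_Suc_0[of j dims 0 W i] by (simp add: prodmat_eq_segprod)

lemma segprod_add:
  "i < dims (k + d1 + d2) \<Longrightarrow>
   segprod dims W k (d1 + d2) i a = (\<Sum>c<dims (k + d1). segprod dims W (k + d1) d2 i c * segprod dims W k d1 c a)"
proof (induction d2 arbitrary: i)
  case 0
  have "(\<Sum>c<dims (k + d1). segprod dims W (k + d1) 0 i c * segprod dims W k d1 c a)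
      = (\<Sum>c<dims (k + d1). (if c = i then 1 else 0) * segprod dims W k d1 c a)"
    by (intro sum.cong refl) auto
  also have "\<dots> = segprod dims W k d1 i a" using 0 by (intro sum_indicator_mult) simp
  finally show ?case by simp
next
  case (Suc d2)
  have "segprod dims W k (d1 + Suc d2) i a
      = (\<Sum>e<dims (k + d1 + d2). W (Suc (k + d1 + d2)) i e *
           (\<Sum>c<dims (k + d1). segprod dims W (k + d1) d2 e c * segprod dims W k d1 c a))"
    by (simp add: Suc.IH add.assoc)
  also have "\<dots> = (\<Sum>c<dims (k + d1). (\<Sum>e<dims (k + d1 + d2). W (Suc (k + d1 + d2)) i e *
                    segprod dims W (k + d1) d2 e c) * segprod dims W k d1 c a)"
    by (simp add: sum_distrib_left sum_distrib_right mult.assoc sum.swap[of _ "{..<dims (k + d1)}"])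
  finally show ?case by simp
qed

lemma prodmat_upd_entry:
  assumes "a < dims (Suc m0)" "b < dims m0"
  shows "prodmat dims (upd_entry W (Suc m0) a b (W (Suc m0) a b + s)) d i j =
    prodmat dims W d i j +
    (if Suc m0 \<le> d then s * segprod dims W (Suc m0) (d - Suc m0) i a * prodmat dims W m0 b j else 0)"
proof (induction d arbitrary: i j)
  case (Suc d)
  let ?W' = "upd_entry W (Suc m0) a b (W (Suc m0) a b + s)"
  consider "Suc d < Suc m0" | "d = m0" | "Suc m0 \<le> d" by linarith
  then show ?case
  proof cases
    case 1
    then have "prodmat dims ?W' (Suc d) i j = prodmat dims W (Suc d) i j"
      by (intro prodmat_cong) (auto simp: upd_entry_def)
    then show ?thesis using 1 by simp
  next
    case 2
    have below: "prodmat dims ?W' m0 c j = prodmat dims W m0 c j" for c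
      by (rule prodmat_cong) (auto simp: upd_entry_def)
    have "prodmat dims ?W' (Suc d) i j = (\<Sum>c<dims m0. ?W' (Suc m0) i c * prodmat dims W m0 c j)"
      using 2 by (simp only: prodmat.simps below)
    also have "\<dots> = (\<Sum>c<dims m0. W (Suc m0) i c * prodmat dims W m0 c j)
        + (\<Sum>c<dims m0. (if i = a \<and> c = b then s else 0) * prodmat dims W m0 c j)"
      by (auto simp: upd_entry_def sum.distrib[symmetric] algebra_simps intro!: sum.cong)
    also have "(\<Sum>c<dims m0. (if i = a \<and> c = b then s else 0) * prodmat dims W m0 c j)
        = (\<Sum>c<dims m0. if c = b then (if i = a then s * prodmat dims W m0 b j else 0) else 0)"
      by (rule sum.cong) auto
    finally show ?thesis using 2 assms by simp
  next
    case 3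
    have "prodmat dims ?W' (Suc d) i j = (\<Sum>c<dims d. W (Suc d) i c * prodmat dims ?W' d c j)"
      using 3 by (simp add: upd_entry_def)
    also have "\<dots> = prodmat dims W (Suc d) i j
        + s * (\<Sum>c<dims d. W (Suc d) i c * segprod dims W (Suc m0) (d - Suc m0) c a) * prodmat dims W m0 b j"
      using 3 unfolding Suc.IH by (simp add: algebra_simps sum.distrib sum_distrib_left sum_distrib_right)
    also have "(\<Sum>c<dims d. W (Suc d) i c * segprod dims W (Suc m0) (d - Suc m0) c a)
        = segprod dims W (Suc m0) (Suc d - Suc m0) i a"
    proof -
      have "Suc d - Suc m0 = Suc (d - Suc m0)" "Suc m0 + (d - Suc m0) = d" using 3 by auto
      then show ?thesis by (simp only: segprod.simps)
    qed
    finally show ?thesis using 3 by simp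
  qed
qed simp

text \<open>The derivative of \<open>W \<mapsto> W\<^sub>d \<cdots> W\<^sub>1\<close> in direction \<open>Wd\<close>, by the product rule.\<close>

definition prodmat_deriv :: "(nat \<Rightarrow> nat) \<Rightarrow> net \<Rightarrow> net \<Rightarrow> nat \<Rightarrow> nat \<Rightarrow> nat \<Rightarrow> real" where
  "prodmat_deriv dims W Wd d i j =
     (\<Sum>m<d. \<Sum>a<dims (Suc m). \<Sum>b<dims m.
        segprod dims W (Suc m) (d - Suc m) i a * Wd (Suc m) a b * prodmat dims W m b j)"

lemma prodmat_deriv_Suc:
  assumes "i < dims (Suc d)"
  shows "prodmat_deriv dims W Wd (Suc d) i j =
    (\<Sum>c<dims d. Wd (Suc d) i c * prodmat dims W d c j + W (Suc d) i c * prodmat_deriv dims W Wd d c j)"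
proof -
  have top: "(\<Sum>a<dims (Suc d). \<Sum>b<dims d. segprod dims W (Suc d) 0 i a * Wd (Suc d) a b * prodmat dims W d b j)
      = (\<Sum>c<dims d. Wd (Suc d) i c * prodmat dims W d c j)"
  proof -
    have "(\<Sum>a<dims (Suc d). \<Sum>b<dims d. segprod dims W (Suc d) 0 i a * Wd (Suc d) a b * prodmat dims W d b j)
        = (\<Sum>a<dims (Suc d). (if a = i then 1 else 0) * (\<Sum>b<dims d. Wd (Suc d) a b * prodmat dims W d b j))"
      by (intro sum.cong refl) (auto simp: sum_distrib_left)
    then show ?thesis using sum_indicator_mult[OF assms] by simp
  qed
  have lower: "(\<Sum>c<dims d. W (Suc d) i c * prodmat_deriv dims W Wd d c j)
      = (\<Sum>m<d. \<Sum>a<dims (Suc m). \<Sum>b<dims m.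
           segprod dims W (Suc m) (Suc d - Suc m) i a * Wd (Suc m) a b * prodmat dims W m b j)"
    unfolding prodmat_deriv_def sum_mult_sum3_swap
  proof (intro sum.cong refl)
    fix m a b assume "m \<in> {..<d}"
    then have "Suc d - Suc m = Suc (d - Suc m)" "Suc m + (d - Suc m) = d" by auto
    then show "(\<Sum>c<dims d. W (Suc d) i c * (segprod dims W (Suc m) (d - Suc m) c a * Wd (Suc m) a b * prodmat dims W m b j))
        = segprod dims W (Suc m) (Suc d - Suc m) i a * Wd (Suc m) a b * prodmat dims W m b j"
      by (simp add: sum_distrib_right mult.assoc)
  qed
  show ?thesis
    unfolding sum.distrib lower top[symmetric]
    by (simp add: prodmat_deriv_def sum.lessThan_Suc[of _ d] add.commute)
qed

lemma prodmat_has_derivative: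
  fixes Wt :: "real \<Rightarrow> net" and Wd :: net
  assumes deriv: "\<And>k i j. k \<in> {1..N} \<Longrightarrow> i < dims k \<Longrightarrow> j < dims (k - 1) \<Longrightarrow>
      ((\<lambda>s. Wt s k i j) has_real_derivative Wd k i j) (at t within S)"
  shows "d \<le> N \<Longrightarrow> i < dims d \<Longrightarrow>
    ((\<lambda>s. prodmat dims (Wt s) d i j) has_real_derivative prodmat_deriv dims (Wt t) Wd d i j) (at t within S)"
proof (induction d arbitrary: i)
  case (Suc d)
  have "((\<lambda>s. Wt s (Suc d) i c * prodmat dims (Wt s) d c j) has_real_derivative
          Wd (Suc d) i c * prodmat dims (Wt t) d c j + prodmat_deriv dims (Wt t) Wd d c j * Wt t (Suc d) i c)
          (at t within S)" if "c < dims d" for c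
    using Suc that by (intro DERIV_mult deriv) auto
  then show ?case
    unfolding prodmat.simps prodmat_deriv_Suc[where dims = dims and W = "Wt t", OF Suc.prems(2)]
    by (intro DERIV_sum) (simp add: mult.commute)
qed (simp add: prodmat_deriv_def)

section \<open>Frobenius and spectral norms\<close>

definition fro2 :: "(nat \<Rightarrow> nat) \<Rightarrow> net \<Rightarrow> nat \<Rightarrow> real" where
  "fro2 dims W k = (\<Sum>i<dims k. \<Sum>j<dims (k - 1). (W k i j)\<^sup>2)"

lemma frob_eq_sqrt_fro2: "frob dims W k = sqrt (fro2 dims W k)"
  by (simp add: frob_def fro2_def)

lemma fro2_nonneg: "fro2 dims W k \<ge> 0"
  by (auto simp: fro2_def intro!: sum_nonneg)

definition balance :: "(nat \<Rightarrow> nat) \<Rightarrow> net \<Rightarrow> nat \<Rightarrow> nat \<Rightarrow> nat \<Rightarrow> real" where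
  "balance dims W k b c =
     (\<Sum>a<dims (Suc k). W (Suc k) a b * W (Suc k) a c) - (\<Sum>e<dims (k - 1). W k b e * W k c e)"

lemma fro2_Suc_diff: "fro2 dims W (Suc k) - fro2 dims W k = (\<Sum>b<dims k. balance dims W k b b)"
  unfolding fro2_def balance_def sum_subtractf
  by (simp add: power2_eq_square sum.swap[of _ "{..<dims k}"])

lemma vnorm_sq: "(vnorm m v)\<^sup>2 = (\<Sum>i<m. (v i)\<^sup>2)"
  unfolding vnorm_def by (simp add: sum_nonneg)

lemma vnorm_nonneg: "vnorm m v \<ge> 0"
  unfolding vnorm_def by (simp add: sum_nonneg)

lemma vinner_le: "vinner m u v \<le> vnorm m u * vnorm m v"
  unfolding vinner_def vnorm_def by (rule sum_mult_le_sqrt_sum_squares)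

lemma vinner_abs_le: "\<bar>vinner m u v\<bar> \<le> vnorm m u * vnorm m v"
proof -
  have "- vinner m u v = vinner m (\<lambda>i. - u i) v" by (simp add: vinner_def sum_negf)
  also have "\<dots> \<le> vnorm m (\<lambda>i. - u i) * vnorm m v" by (rule vinner_le)
  also have "vnorm m (\<lambda>i. - u i) = vnorm m u" by (simp add: vnorm_def)
  finally show ?thesis using vinner_le[of m u v] by linarith
qed

lemma sum_scaled_eq_vinner: "(\<Sum>j<m. q j * (v j * c)) = c * vinner m v q"
  by (simp add: vinner_def sum_distrib_left algebra_simps)

lemma layer_mv_sqnorm_le: "(vnorm (dims k) (layer_mv dims W k v))\<^sup>2 \<le> fro2 dims W k * (vnorm (dims (k - 1)) v)\<^sup>2"
proof -
  have "(vnorm (dims k) (layer_mv dims W k v))\<^sup>2 = (\<Sum>i<dims k. (\<Sum>j<dims (k - 1). W k i j * v j)\<^sup>2)"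
    by (simp add: vnorm_sq layer_mv_def)
  also have "\<dots> \<le> (\<Sum>i<dims k. (\<Sum>j<dims (k - 1). (W k i j)\<^sup>2) * (\<Sum>j<dims (k - 1). (v j)\<^sup>2))"
    by (intro sum_mono Cauchy_Schwarz_ineq_sum)
  also have "\<dots> = fro2 dims W k * (vnorm (dims (k - 1)) v)\<^sup>2"
    by (simp add: fro2_def vnorm_sq sum_distrib_right)
  finally show ?thesis .
qed

lemma layer_mv_norm_le_frob: "vnorm (dims (k - 1)) v \<le> 1 \<Longrightarrow> vnorm (dims k) (layer_mv dims W k v) \<le> sqrt (fro2 dims W k)"
proof -
  assume v: "vnorm (dims (k - 1)) v \<le> 1"
  have "(vnorm (dims (k - 1)) v)\<^sup>2 \<le> 1" using v vnorm_nonneg[of "dims (k - 1)" v] by (simp add: power_le_one)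
  then have "fro2 dims W k * (vnorm (dims (k - 1)) v)\<^sup>2 \<le> fro2 dims W k * 1" using fro2_nonneg by (intro mult_left_mono) auto
  then have "(vnorm (dims k) (layer_mv dims W k v))\<^sup>2 \<le> fro2 dims W k * 1"
    using layer_mv_sqnorm_le[of dims k W v] by linarith
  then show ?thesis using vnorm_nonneg real_le_rsqrt by simp
qed

definition gain_set :: "(nat \<Rightarrow> nat) \<Rightarrow> net \<Rightarrow> nat \<Rightarrow> real set" where
  "gain_set dims W k = {vnorm (dims k) (layer_mv dims W k v) | v. vnorm (dims (k - 1)) v \<le> 1}"

lemma specnorm_eq_Sup: "specnorm dims W k = Sup (gain_set dims W k)"
  by (simp add: specnorm_def gain_set_def)

lemma gain_set_bdd: "bdd_above (gain_set dims W k)"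
  unfolding gain_set_def by (rule bdd_aboveI[of _ "sqrt (fro2 dims W k)"]) (auto intro: layer_mv_norm_le_frob)

lemma gain_set_nonempty: "gain_set dims W k \<noteq> {}"
proof -
  have "vnorm (dims (k - 1)) (\<lambda>_. 0) \<le> 1" by (simp add: vnorm_def)
  then show ?thesis unfolding gain_set_def by blast
qed

lemma layer_mv_norm_le_specnorm: "vnorm (dims (k - 1)) v \<le> 1 \<Longrightarrow> vnorm (dims k) (layer_mv dims W k v) \<le> specnorm dims W k"
  unfolding specnorm_eq_Sup by (rule cSup_upper[OF _ gain_set_bdd]) (auto simp: gain_set_def)

lemma specnorm_le_frob: "specnorm dims W k \<le> sqrt (fro2 dims W k)"
  unfolding specnorm_eq_Sup by (rule cSup_least[OF gain_set_nonempty]) (auto simp: gain_set_def intro: layer_mv_norm_le_frob)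

lemma specnorm_nonneg: "specnorm dims W k \<ge> 0"
proof -
  have "vnorm (dims (k - 1)) (\<lambda>_. 0) \<le> 1" by (simp add: vnorm_def)
  from layer_mv_norm_le_specnorm[of dims k "\<lambda>_. 0" W, OF this] show ?thesis
    using vnorm_nonneg[of "dims k" "layer_mv dims W k (\<lambda>_. 0)"] by linarith
qed

lemma layer_mv_scale: "layer_mv dims W k (\<lambda>j. a * v j) = (\<lambda>i. a * layer_mv dims W k v i)"
  by (auto simp: layer_mv_def sum_distrib_left algebra_simps)

lemma vnorm_scale: "vnorm m (\<lambda>i. a * v i) = \<bar>a\<bar> * vnorm m v"
  by (simp add: vnorm_def power_mult_distrib sum_distrib_left[symmetric] real_sqrt_mult)

lemma layer_mv_norm_le: "vnorm (dims k) (layer_mv dims W k v) \<le> specnorm dims W k * vnorm (dims (k - 1)) v"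
proof (cases "vnorm (dims (k - 1)) v = 0")
  case True
  then have "\<forall>j<dims (k - 1). v j = 0" unfolding vnorm_def
    by (simp add: sum_nonneg_eq_0_iff)
  then have "layer_mv dims W k v = (\<lambda>i. 0)" by (auto simp: layer_mv_def)
  then show ?thesis using True by (simp add: vnorm_def)
next
  case False
  define a where "a = vnorm (dims (k - 1)) v"
  have a: "a > 0" using False vnorm_nonneg unfolding a_def by (metis less_eq_real_def)
  have "vnorm (dims (k - 1)) (\<lambda>j. (1 / a) * v j) = 1" using vnorm_scale[of "dims (k - 1)" "1 / a" v] a unfolding a_def by simp
  then have "vnorm (dims k) (layer_mv dims W k (\<lambda>j. (1 / a) * v j)) \<le> specnorm dims W k" by (intro layer_mv_norm_le_specnorm) simp
  then have "\<bar>1 / a\<bar> * vnorm (dims k) (layer_mv dims W k v) \<le> specnorm dims W k"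
    by (simp only: layer_mv_scale vnorm_scale)
  then have "(1 / a) * vnorm (dims k) (layer_mv dims W k v) \<le> specnorm dims W k"
    using a by simp
  then have "vnorm (dims k) (layer_mv dims W k v) \<le> specnorm dims W k * a" using a by (simp add: field_simps mult.commute)
  then show ?thesis unfolding a_def .
qed

lemma vinner_layer_tmv: "vinner (dims (k - 1)) yy (layer_tmv dims W k q) = vinner (dims k) q (layer_mv dims W k yy)"
proof -
  have "vinner (dims (k - 1)) yy (layer_tmv dims W k q) = (\<Sum>j<dims (k - 1). \<Sum>i<dims k. yy j * W k i j * q i)"
    by (simp add: vinner_def layer_tmv_def sum_distrib_left mult.assoc)
  also have "\<dots> = (\<Sum>i<dims k. \<Sum>j<dims (k - 1). yy j * W k i j * q i)" by (rule sum.swap)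
  also have "\<dots> = vinner (dims k) q (layer_mv dims W k yy)"
    by (simp add: vinner_def layer_mv_def sum_distrib_left mult.assoc mult.commute mult.left_commute)
  finally show ?thesis .
qed

lemma layer_tmv_norm_le_specnorm:
  assumes q: "vnorm (dims k) q = 1"
  shows "vnorm (dims (k - 1)) (layer_tmv dims W k q) \<le> specnorm dims W k"
proof -
  define w where "w = layer_tmv dims W k q"
  have "(vnorm (dims (k - 1)) w)\<^sup>2 = vinner (dims k) q (layer_mv dims W k w)"
  proof -
    have "(vnorm (dims (k - 1)) w)\<^sup>2 = vinner (dims (k - 1)) w w" unfolding vnorm_sq vinner_def by (simp add: power2_eq_square)
    also have "\<dots> = vinner (dims (k - 1)) w (layer_tmv dims W k q)" by (simp add: w_def)
    also have "\<dots> = vinner (dims k) q (layer_mv dims W k w)" by (rule vinner_layer_tmv)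
    finally show ?thesis .
  qed
  also have "\<dots> \<le> vnorm (dims k) q * vnorm (dims k) (layer_mv dims W k w)" by (rule vinner_le)
  also have "\<dots> \<le> 1 * (specnorm dims W k * vnorm (dims (k - 1)) w)" using q layer_mv_norm_le by simp
  finally have "(vnorm (dims (k - 1)) w)\<^sup>2 \<le> specnorm dims W k * vnorm (dims (k - 1)) w" by simp
  then have "vnorm (dims (k - 1)) w * vnorm (dims (k - 1)) w \<le> specnorm dims W k * vnorm (dims (k - 1)) w"
    by (simp add: power2_eq_square)
  then show ?thesis unfolding w_def[symmetric] using vnorm_nonneg[of "dims (k - 1)" w] specnorm_nonneg[of dims W k]
    by (cases "vnorm (dims (k - 1)) w = 0") (auto intro: mult_right_le_imp_le)
qed

lemma top_sing_pairD:
  assumes "top_sing_pair dims W k u v"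
  shows "(\<Sum>i<dims k. (u i)\<^sup>2) = 1" "(\<Sum>j<dims (k - 1). (v j)\<^sup>2) = 1"
    "\<And>i. i < dims k \<Longrightarrow> layer_mv dims W k v i = specnorm dims W k * u i"
    "\<And>j. j < dims (k - 1) \<Longrightarrow> layer_tmv dims W k u j = specnorm dims W k * v j"
  using assms unfolding top_sing_pair_def by (auto simp: vnorm_def sum_nonneg)

lemma top_sing_pair_bilinear:
  assumes tsp: "top_sing_pair dims W k u v"
  shows "(\<Sum>i<dims k. \<Sum>j<dims (k - 1). W k i j * u i * v j) = specnorm dims W k"
proof -
  have "(\<Sum>i<dims k. \<Sum>j<dims (k - 1). W k i j * u i * v j) = (\<Sum>i<dims k. u i * layer_mv dims W k v i)"
    by (simp add: layer_mv_def sum_distrib_left mult.commute mult.left_commute)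
  also have "\<dots> = (\<Sum>i<dims k. specnorm dims W k * (u i)\<^sup>2)"
    using top_sing_pairD(3)[OF tsp] by (intro sum.cong refl) (simp add: power2_eq_square)
  also have "\<dots> = specnorm dims W k" using top_sing_pairD(1)[OF tsp] by (simp add: sum_distrib_left[symmetric])
  finally show ?thesis .
qed

lemma fro2_minus_rank1:
  assumes tsp: "top_sing_pair dims W k u v"
  shows "(\<Sum>i<dims k. \<Sum>j<dims (k - 1). (W k i j - specnorm dims W k * u i * v j)\<^sup>2) = fro2 dims W k - (specnorm dims W k)\<^sup>2"
proof -
  let ?s = "specnorm dims W k"
  have P: "(\<Sum>i<dims k. \<Sum>j<dims (k - 1). (u i)\<^sup>2 * (v j)\<^sup>2) = 1"
    using top_sing_pairD(1,2)[OF tsp] by (simp add: sum_product[symmetric])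
  have "(\<Sum>i<dims k. \<Sum>j<dims (k - 1). (W k i j - ?s * u i * v j)\<^sup>2)
     = (\<Sum>i<dims k. \<Sum>j<dims (k - 1). (W k i j)\<^sup>2) - 2 * ?s * (\<Sum>i<dims k. \<Sum>j<dims (k - 1). W k i j * u i * v j)
       + ?s\<^sup>2 * (\<Sum>i<dims k. \<Sum>j<dims (k - 1). (u i)\<^sup>2 * (v j)\<^sup>2)"
    by (simp add: power2_eq_square algebra_simps sum.distrib sum_subtractf sum_distrib_left)
  also have "\<dots> = fro2 dims W k - ?s\<^sup>2"
    unfolding P top_sing_pair_bilinear[OF tsp] by (simp add: fro2_def power2_eq_square)
  finally show ?thesis .
qed

definition residual ::
    "(nat \<Rightarrow> nat) \<Rightarrow> net \<Rightarrow> nat \<Rightarrow> (nat \<Rightarrow> real) \<Rightarrow> (nat \<Rightarrow> real) \<Rightarrow> (nat \<Rightarrow> real) \<Rightarrow> nat \<Rightarrow> real"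
  where
  "residual dims W k u v q i = layer_mv dims W k q i - specnorm dims W k * u i * vinner (dims (k - 1)) v q"

lemma residual_orthogonal:
  assumes tsp: "top_sing_pair dims W k u v"
  shows "(\<Sum>i<dims k. u i * residual dims W k u v q i) = 0"
proof -
  have "(\<Sum>i<dims k. u i * layer_mv dims W k q i) = vinner (dims k) u (layer_mv dims W k q)" by (simp add: vinner_def)
  also have "\<dots> = vinner (dims (k - 1)) q (layer_tmv dims W k u)" by (rule vinner_layer_tmv[symmetric])
  also have "\<dots> = specnorm dims W k * vinner (dims (k - 1)) v q"
    using top_sing_pairD(4)[OF tsp] by (simp add: vinner_def sum_distrib_left mult.commute mult.left_commute)
  finally have A: "(\<Sum>i<dims k. u i * layer_mv dims W k q i) = specnorm dims W k * vinner (dims (k - 1)) v q" .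
  have "(\<Sum>i<dims k. u i * residual dims W k u v q i) = (\<Sum>i<dims k. u i * layer_mv dims W k q i)
      - specnorm dims W k * vinner (dims (k - 1)) v q * (\<Sum>i<dims k. (u i)\<^sup>2)"
    by (simp add: residual_def algebra_simps sum_subtractf sum_distrib_left power2_eq_square)
  then show ?thesis using A top_sing_pairD(1)[OF tsp] by simp
qed

lemma layer_mv_sqnorm_decomp:
  assumes tsp: "top_sing_pair dims W k u v"
  shows "(vnorm (dims k) (layer_mv dims W k q))\<^sup>2
           = (specnorm dims W k)\<^sup>2 * (vinner (dims (k - 1)) v q)\<^sup>2 + (\<Sum>i<dims k. (residual dims W k u v q i)\<^sup>2)"
proof -
  let ?s = "specnorm dims W k" and ?a = "vinner (dims (k - 1)) v q"
  have "(vnorm (dims k) (layer_mv dims W k q))\<^sup>2 = (\<Sum>i<dims k. (residual dims W k u v q i + ?s * ?a * u i)\<^sup>2)"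
    by (simp add: vnorm_sq residual_def algebra_simps)
  also have "\<dots> = (\<Sum>i<dims k. (residual dims W k u v q i)\<^sup>2)
      + 2 * ?s * ?a * (\<Sum>i<dims k. u i * residual dims W k u v q i) + ?s\<^sup>2 * ?a\<^sup>2 * (\<Sum>i<dims k. (u i)\<^sup>2)"
    by (simp add: power2_eq_square algebra_simps sum.distrib sum_distrib_left)
  also have "\<dots> = ?s\<^sup>2 * ?a\<^sup>2 + (\<Sum>i<dims k. (residual dims W k u v q i)\<^sup>2)"
    unfolding residual_orthogonal[OF tsp] top_sing_pairD(1)[OF tsp] by simp
  finally show ?thesis .
qed

lemma residual_sqnorm_le:
  assumes tsp: "top_sing_pair dims W k u v"
  shows "(\<Sum>i<dims k. (residual dims W k u v q i)\<^sup>2)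
           \<le> (fro2 dims W k - (specnorm dims W k)\<^sup>2) * ((vnorm (dims (k - 1)) q)\<^sup>2 - (vinner (dims (k - 1)) v q)\<^sup>2)"
proof -
  let ?s = "specnorm dims W k" and ?a = "vinner (dims (k - 1)) v q"
  define E where "E i j = W k i j - ?s * u i * v j" for i j
  define z where "z j = q j - ?a * v j" for j
  have Ez: "residual dims W k u v q i = (\<Sum>j<dims (k - 1). E i j * z j)" if i: "i < dims k" for i
  proof -
    have vq: "(\<Sum>j<dims (k - 1). v j * q j) = ?a" by (simp add: vinner_def)
    have "(\<Sum>j<dims (k - 1). E i j * z j) = (\<Sum>j<dims (k - 1). W k i j * q j) - ?a * (\<Sum>j<dims (k - 1). W k i j * v j)
        - ?s * u i * (\<Sum>j<dims (k - 1). v j * q j) + ?s * u i * ?a * (\<Sum>j<dims (k - 1). (v j)\<^sup>2)"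
      unfolding E_def z_def
      by (simp add: algebra_simps sum_subtractf sum.distrib sum_distrib_left power2_eq_square)
    also have "\<dots> = residual dims W k u v q i" using top_sing_pairD(2,3)[OF tsp] i
      unfolding vq by (simp add: residual_def layer_mv_def)
    finally show ?thesis by simp
  qed
  have "(\<Sum>i<dims k. (residual dims W k u v q i)\<^sup>2)
      \<le> (\<Sum>i<dims k. (\<Sum>j<dims (k - 1). (E i j)\<^sup>2) * (\<Sum>j<dims (k - 1). (z j)\<^sup>2))"
    using Ez by (intro sum_mono) (simp add: Cauchy_Schwarz_ineq_sum)
  also have "\<dots> = (\<Sum>i<dims k. \<Sum>j<dims (k - 1). (E i j)\<^sup>2) * (\<Sum>j<dims (k - 1). (z j)\<^sup>2)"
    by (simp only: sum_distrib_right)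
  also have "\<dots> = (fro2 dims W k - ?s\<^sup>2) * (\<Sum>j<dims (k - 1). (z j)\<^sup>2)"
    using fro2_minus_rank1[OF tsp] unfolding E_def by simp
  also have "(\<Sum>j<dims (k - 1). (z j)\<^sup>2) = (vnorm (dims (k - 1)) q)\<^sup>2 - ?a\<^sup>2"
  proof -
    have "(\<Sum>j<dims (k - 1). (z j)\<^sup>2)
        = (\<Sum>j<dims (k - 1). (q j)\<^sup>2) - 2 * ?a * ?a + ?a\<^sup>2 * (\<Sum>j<dims (k - 1). (v j)\<^sup>2)"
      unfolding z_def
      by (simp add: power2_eq_square algebra_simps sum.distrib sum_subtractf sum_distrib_left
          sum_scaled_eq_vinner)
    then show ?thesis using top_sing_pairD(2)[OF tsp] unfolding vnorm_sq by (simp add: power2_eq_square)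
  qed
  finally show ?thesis .
qed

lemma balance_quadratic_form:
  "(\<Sum>b<dims k. \<Sum>c<dims k. q b * q c * balance dims W k b c)
   = (vnorm (dims (Suc k)) (layer_mv dims W (Suc k) q))\<^sup>2 - (vnorm (dims (k - 1)) (layer_tmv dims W k q))\<^sup>2"
proof -
  have A: "(\<Sum>b<dims k. \<Sum>c<dims k. q b * q c * (\<Sum>a<dims (Suc k). W (Suc k) a b * W (Suc k) a c))
     = (vnorm (dims (Suc k)) (layer_mv dims W (Suc k) q))\<^sup>2"
  proof -
    have "(\<Sum>b<dims k. \<Sum>c<dims k. q b * q c * (\<Sum>a<dims (Suc k). W (Suc k) a b * W (Suc k) a c))
       = (\<Sum>b<dims k. \<Sum>c<dims k. \<Sum>a<dims (Suc k). (W (Suc k) a b * q b) * (W (Suc k) a c * q c))"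
      by (simp add: sum_distrib_left mult_ac)
    also have "\<dots> = (\<Sum>a<dims (Suc k). \<Sum>b<dims k. \<Sum>c<dims k. (W (Suc k) a b * q b) * (W (Suc k) a c * q c))"
      by (simp add: sum.swap[of _ "{..<dims (Suc k)}"])
    also have "\<dots> = (\<Sum>a<dims (Suc k). (\<Sum>b<dims k. W (Suc k) a b * q b) * (\<Sum>c<dims k. W (Suc k) a c * q c))"
      by (simp add: sum_product)
    also have "\<dots> = (vnorm (dims (Suc k)) (layer_mv dims W (Suc k) q))\<^sup>2"
      unfolding vnorm_sq layer_mv_def by (simp add: power2_eq_square)
    finally show ?thesis .
  qed
  have B: "(\<Sum>b<dims k. \<Sum>c<dims k. q b * q c * (\<Sum>e<dims (k - 1). W k b e * W k c e))
     = (vnorm (dims (k - 1)) (layer_tmv dims W k q))\<^sup>2"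
  proof -
    have "(\<Sum>b<dims k. \<Sum>c<dims k. q b * q c * (\<Sum>e<dims (k - 1). W k b e * W k c e))
       = (\<Sum>b<dims k. \<Sum>c<dims k. \<Sum>e<dims (k - 1). (W k b e * q b) * (W k c e * q c))"
      by (simp add: sum_distrib_left mult_ac)
    also have "\<dots> = (\<Sum>b<dims k. \<Sum>e<dims (k - 1). \<Sum>c<dims k. (W k b e * q b) * (W k c e * q c))"
      by (rule sum.cong[OF refl], rule sum.swap)
    also have "\<dots> = (\<Sum>e<dims (k - 1). \<Sum>b<dims k. \<Sum>c<dims k. (W k b e * q b) * (W k c e * q c))"
      by (rule sum.swap)
    also have "\<dots> = (\<Sum>e<dims (k - 1). (\<Sum>b<dims k. W k b e * q b) * (\<Sum>c<dims k. W k c e * q c))"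
      by (simp add: sum_product)
    also have "\<dots> = (vnorm (dims (k - 1)) (layer_tmv dims W k q))\<^sup>2"
      unfolding vnorm_sq layer_tmv_def by (simp add: power2_eq_square)
    finally show ?thesis .
  qed
  show ?thesis unfolding balance_def A[symmetric] B[symmetric]
    by (simp add: right_diff_distrib sum_subtractf)
qed

lemma balance_quadratic_form_bound:
  "\<bar>\<Sum>b<dims k. \<Sum>c<dims k. q b * q c * balance dims W k b c\<bar>
    \<le> sqrt (\<Sum>b<dims k. \<Sum>c<dims k. (balance dims W k b c)\<^sup>2) * (vnorm (dims k) q)\<^sup>2"
proof -
  have sq: "sqrt (\<Sum>b<dims k. \<Sum>c<dims k. (q b * q c)\<^sup>2) = (vnorm (dims k) q)\<^sup>2"
  proof -
    have "(\<Sum>b<dims k. \<Sum>c<dims k. (q b * q c)\<^sup>2) = ((vnorm (dims k) q)\<^sup>2)\<^sup>2"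
      by (simp add: vnorm_sq power_mult_distrib sum_product power2_eq_square[of "sum _ _"])
    then show ?thesis using real_sqrt_abs[of "(vnorm (dims k) q)\<^sup>2"] by simp
  qed
  have "(\<Sum>b<dims k. \<Sum>c<dims k. q b * q c * balance dims W k b c)
      \<le> sqrt (\<Sum>b<dims k. \<Sum>c<dims k. (q b * q c)\<^sup>2) * sqrt (\<Sum>b<dims k. \<Sum>c<dims k. (balance dims W k b c)\<^sup>2)"
    by (rule double_sum_mult_le_sqrt_sum_squares)
  moreover have "- (\<Sum>b<dims k. \<Sum>c<dims k. q b * q c * balance dims W k b c)
      \<le> sqrt (\<Sum>b<dims k. \<Sum>c<dims k. (q b * q c)\<^sup>2) * sqrt (\<Sum>b<dims k. \<Sum>c<dims k. (- balance dims W k b c)\<^sup>2)"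
    using double_sum_mult_le_sqrt_sum_squares[where a="\<lambda>b c. q b * q c" and b="\<lambda>b c. - balance dims W k b c"] by (simp add: sum_negf)
  ultimately show ?thesis unfolding sq by (simp add: abs_le_iff mult.commute)
qed

lemma top_sing_pair_layer_mv_sqnorm:
  assumes "top_sing_pair dims W k u v"
  shows "(vnorm (dims k) (layer_mv dims W k v))\<^sup>2 = (specnorm dims W k)\<^sup>2"
proof -
  have "(vnorm (dims k) (layer_mv dims W k v))\<^sup>2 = (\<Sum>i<dims k. (specnorm dims W k)\<^sup>2 * (u i)\<^sup>2)"
    unfolding vnorm_sq using top_sing_pairD(3)[OF assms]
    by (intro sum.cong refl) (simp add: power_mult_distrib)
  also have "\<dots> = (specnorm dims W k)\<^sup>2"
    using top_sing_pairD(1)[OF assms] by (simp add: sum_distrib_left[symmetric])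
  finally show ?thesis .
qed

lemma top_sing_pair_layer_tmv_sqnorm:
  assumes "top_sing_pair dims W k u v"
  shows "(vnorm (dims (k - 1)) (layer_tmv dims W k u))\<^sup>2 = (specnorm dims W k)\<^sup>2"
proof -
  have "(vnorm (dims (k - 1)) (layer_tmv dims W k u))\<^sup>2 = (\<Sum>j<dims (k - 1). (specnorm dims W k)\<^sup>2 * (v j)\<^sup>2)"
    unfolding vnorm_sq using top_sing_pairD(4)[OF assms]
    by (intro sum.cong refl) (simp add: power_mult_distrib)
  also have "\<dots> = (specnorm dims W k)\<^sup>2"
    using top_sing_pairD(2)[OF assms] by (simp add: sum_distrib_left[symmetric])
  finally show ?thesis .
qed

lemma specnorm_sq_le_fro2: "(specnorm dims W k)\<^sup>2 \<le> fro2 dims W k"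
  using specnorm_le_frob[of dims W k] specnorm_nonneg fro2_nonneg
  by (metis power_mono real_sqrt_pow2)

lemma fro2_eq_specnorm_sq_if_one_row:
  assumes tsp: "top_sing_pair dims W k u v" and row: "dims k = 1"
  shows "fro2 dims W k = (specnorm dims W k)\<^sup>2"
proof -
  let ?s = "specnorm dims W k"
  have u0: "(u 0)\<^sup>2 = 1" using top_sing_pairD(1)[OF tsp] row by simp
  have "W k 0 j - ?s * u 0 * v j = 0" if j: "j < dims (k - 1)" for j
  proof -
    have "(W k 0 j - ?s * u 0 * v j) * u 0 = layer_tmv dims W k u j - ?s * v j * (u 0)\<^sup>2"
      using row by (simp add: layer_tmv_def algebra_simps power2_eq_square)
    also have "\<dots> = 0" using top_sing_pairD(4)[OF tsp j] u0 by simp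
    finally show ?thesis using u0 by auto
  qed
  then have "(\<Sum>i<dims k. \<Sum>j<dims (k - 1). (W k i j - ?s * u i * v j)\<^sup>2) = 0"
    using row by simp
  then show ?thesis using fro2_minus_rank1[OF tsp] by simp
qed

lemma align_err_eq:
  assumes tsp: "top_sing_pair dims W k u v" and pos: "fro2 dims W k > 0"
  shows "align_err dims W k u v = sqrt (2 - 2 * specnorm dims W k / frob dims W k)"
proof -
  let ?F = "sqrt (fro2 dims W k)"
  have uv: "(\<Sum>i<dims k. \<Sum>j<dims (k - 1). (u i)\<^sup>2 * (v j)\<^sup>2) = 1"
    using top_sing_pairD(1,2)[OF tsp] by (simp add: sum_product[symmetric])
  have "(\<Sum>i<dims k. \<Sum>j<dims (k - 1). (W k i j / ?F - u i * v j)\<^sup>2)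
     = (\<Sum>i<dims k. \<Sum>j<dims (k - 1). (W k i j)\<^sup>2) / ?F\<^sup>2
       - 2 / ?F * (\<Sum>i<dims k. \<Sum>j<dims (k - 1). W k i j * u i * v j)
       + (\<Sum>i<dims k. \<Sum>j<dims (k - 1). (u i)\<^sup>2 * (v j)\<^sup>2)"
    by (simp add: power2_eq_square algebra_simps sum.distrib sum_subtractf sum_distrib_left
        sum_divide_distrib)
  also have "\<dots> = 2 - 2 * specnorm dims W k / ?F"
    unfolding uv top_sing_pair_bilinear[OF tsp] using pos by (simp add: fro2_def)
  finally show ?thesis unfolding align_err_def frob_eq_sqrt_fro2 by simp
qed

lemma prodmat_sqnorm_le:
  "(\<Sum>i<dims m. \<Sum>j<dims 0. (prodmat dims W m i j)\<^sup>2) \<le> real (dims 0) * (\<Prod>k\<in>{1..m}. fro2 dims W k)"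
proof (induction m)
  case 0
  have "(\<Sum>j<dims 0. (prodmat dims W 0 i j)\<^sup>2) = 1" if "i < dims 0" for i
  proof -
    have "(\<Sum>j<dims 0. (prodmat dims W 0 i j)\<^sup>2) = (\<Sum>j<dims 0. if j = i then 1 else 0)"
      by (intro sum.cong) auto
    then show ?thesis using that by simp
  qed
  then show ?case by simp
next
  case (Suc m)
  have "(\<Sum>i<dims (Suc m). \<Sum>j<dims 0. (prodmat dims W (Suc m) i j)\<^sup>2)
     \<le> (\<Sum>i<dims (Suc m). \<Sum>j<dims 0. (\<Sum>c<dims m. (W (Suc m) i c)\<^sup>2) * (\<Sum>c<dims m. (prodmat dims W m c j)\<^sup>2))"
    by (intro sum_mono) (simp add: Cauchy_Schwarz_ineq_sum)
  also have "\<dots> = fro2 dims W (Suc m) * (\<Sum>i<dims m. \<Sum>j<dims 0. (prodmat dims W m i j)\<^sup>2)"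
    by (simp add: fro2_def sum_product sum.swap[of _ "{..<dims 0}"])
  also have "\<dots> \<le> fro2 dims W (Suc m) * (real (dims 0) * (\<Prod>k\<in>{1..m}. fro2 dims W k))"
    by (intro mult_left_mono Suc.IH fro2_nonneg)
  also have "\<dots> = real (dims 0) * (\<Prod>k\<in>{1..Suc m}. fro2 dims W k)"
    by (simp add: prod.nat_ivl_Suc' mult_ac)
  finally show ?case .
qed

section \<open>The gradient of the risk\<close>

locale linear_net =
  fixes n L :: nat and dims :: "nat \<Rightarrow> nat"
    and x :: "nat \<Rightarrow> nat \<Rightarrow> real" and y :: "nat \<Rightarrow> real"
    and loss :: "real \<Rightarrow> real"
  assumes loss_differentiable: "\<forall>s. loss differentiable (at s)"
begin

abbreviation "Risk \<equiv> risk loss n x y dims L"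
definition margin :: "net \<Rightarrow> nat \<Rightarrow> real" where
  "margin W i = (\<Sum>j<dims 0. prodmat dims W L 0 j * zvec x y i j)"
text \<open>\<open>wgrad W\<close> is the gradient of the risk as a function of \<open>w\<^sub>p\<^sub>r\<^sub>o\<^sub>d\<close>; \<open>upper_row W k\<close> is
  the row \<open>W\<^sub>L \<cdots> W\<^sub>k\<^sub>+\<^sub>1\<close> (recall \<open>dims L = 1\<close>).\<close>

definition wgrad :: "net \<Rightarrow> nat \<Rightarrow> real" where
  "wgrad W j = (1 / real n) * (\<Sum>i<n. deriv loss (margin W i) * zvec x y i j)"
definition upper_row :: "net \<Rightarrow> nat \<Rightarrow> nat \<Rightarrow> real" where
  "upper_row W k a = segprod dims W k (L - k) 0 a"
definition lower_grad :: "net \<Rightarrow> nat \<Rightarrow> nat \<Rightarrow> real" where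
  "lower_grad W m b = (\<Sum>j<dims 0. prodmat dims W m b j * wgrad W j)"

definition grad :: "net \<Rightarrow> nat \<Rightarrow> nat \<Rightarrow> nat \<Rightarrow> real" where
  "grad W k a b = upper_row W k a * lower_grad W (k - 1) b"
definition grad_sqnorm :: "net \<Rightarrow> real" where
  "grad_sqnorm W = (\<Sum>m<L. \<Sum>a<dims (Suc m). \<Sum>b<dims m. (grad W (Suc m) a b)\<^sup>2)"

lemma risk_eq_margin: "Risk W = (1 / real n) * (\<Sum>i<n. loss (margin W i))"
  by (simp add: risk_def margin_def wprod_def)

lemma loss_has_deriv: "(loss has_real_derivative deriv loss s) (at s)"
  using loss_differentiable DERIV_deriv_iff_real_differentiable by blast

lemma grad_entry_risk:
  assumes "Suc m \<le> L" "a < dims (Suc m)" "b < dims m"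
  shows "grad_entry Risk W (Suc m) a b = upper_row W (Suc m) a * lower_grad W m b"
proof -
  define e where "e i = (\<Sum>j<dims 0. upper_row W (Suc m) a * prodmat dims W m b j * zvec x y i j)" for i
  have eq: "Risk (upd_entry W (Suc m) a b (W (Suc m) a b + s)) = (1 / real n) * (\<Sum>i<n. loss (margin W i + s * e i))" for s
    unfolding risk_eq_margin margin_def e_def prodmat_upd_entry[OF assms(2,3)] using assms(1)
    by (simp add: upper_row_def algebra_simps sum.distrib sum_distrib_left)
  have D: "((\<lambda>s. (1 / real n) * (\<Sum>i<n. loss (margin W i + s * e i))) has_real_derivative
      (1 / real n) * (\<Sum>i<n. deriv loss (margin W i) * e i)) (at 0)"
  proof -
    have "((\<lambda>s. loss (margin W i + s * e i)) has_real_derivative deriv loss (margin W i) * e i) (at 0)" for i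
    proof -
      have "((\<lambda>s. margin W i + s * e i) has_real_derivative e i) (at 0)"
        by (auto intro!: derivative_eq_intros)
      from DERIV_chain2[OF _ this, of loss "deriv loss (margin W i)"] loss_has_deriv show ?thesis by simp
    qed
    then have "((\<lambda>s. \<Sum>i<n. loss (margin W i + s * e i)) has_real_derivative (\<Sum>i<n. deriv loss (margin W i) * e i)) (at 0)"
      by (intro DERIV_sum) auto
    then show ?thesis by (rule DERIV_cmult)
  qed
  have "grad_entry Risk W (Suc m) a b = (1 / real n) * (\<Sum>i<n. deriv loss (margin W i) * e i)"
    unfolding grad_entry_def eq using DERIV_imp_deriv[OF D] by simp
  also have "\<dots> = upper_row W (Suc m) a * lower_grad W m b"
    unfolding e_def lower_grad_def wgrad_def
    by (simp add: sum_distrib_left sum_distrib_right algebra_simps sum.swap[of _ "{..<n}"])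
  finally show ?thesis .
qed

lemma grad_entry_risk_eq_grad:
  "k \<in> {1..L} \<Longrightarrow> i < dims k \<Longrightarrow> j < dims (k - 1) \<Longrightarrow> grad_entry Risk W k i j = grad W k i j"
  using grad_entry_risk[of "k - 1" i j W] by (simp add: grad_def)

lemma upper_row_Suc:
  assumes "Suc k \<le> L" "c < dims k" "0 < dims L"
  shows "upper_row W k c = (\<Sum>a<dims (Suc k). upper_row W (Suc k) a * W (Suc k) a c)"
proof -
  have "L - k = 1 + (L - Suc k)" "k + 1 + (L - Suc k) = L" using assms(1) by auto
  then have "upper_row W k c
      = (\<Sum>a<dims (k + 1). segprod dims W (k + 1) (L - Suc k) 0 a * segprod dims W k 1 a c)"
    unfolding upper_row_def using segprod_add[of 0 dims k 1 "L - Suc k" W c] assms(3) by simp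
  with assms(2) show ?thesis by (simp del: segprod.simps add: segprod_Suc_0 upper_row_def)
qed

lemma lower_grad_Suc: "lower_grad W (Suc m) a = (\<Sum>b<dims m. W (Suc m) a b * lower_grad W m b)"
  unfolding lower_grad_def by (simp add: sum_distrib_left sum_distrib_right mult.assoc sum.swap[of _ "{..<dims m}"])

lemma grad_mult_upper:
  assumes "Suc k \<le> L" "c < dims k" "0 < dims L"
  shows "(\<Sum>a<dims (Suc k). grad W (Suc k) a b * W (Suc k) a c) = lower_grad W k b * upper_row W k c"
  unfolding upper_row_Suc[OF assms] grad_def by (simp add: sum_distrib_left mult_ac)

lemma grad_mult_lower:
  assumes "1 \<le> k"
  shows "(\<Sum>e<dims (k - 1). grad W k b e * W k c e) = upper_row W k b * lower_grad W k c"
proof -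
  obtain m where "k = Suc m" using assms by (cases k) auto
  then show ?thesis by (simp add: grad_def lower_grad_Suc sum_distrib_left mult_ac)
qed

lemma risk_has_derivative:
  fixes Wt :: "real \<Rightarrow> net" and Wd :: net
  assumes WD: "\<And>k i j. k \<in> {1..L} \<Longrightarrow> i < dims k \<Longrightarrow> j < dims (k - 1) \<Longrightarrow>
      ((\<lambda>s. Wt s k i j) has_real_derivative Wd k i j) (at t within S)"
    and dL: "0 < dims L"
  shows "((\<lambda>s. Risk (Wt s)) has_real_derivative
     (\<Sum>m<L. \<Sum>a<dims (Suc m). \<Sum>b<dims m. grad (Wt t) (Suc m) a b * Wd (Suc m) a b))
     (at t within S)"
proof -
  define dP where "dP j = prodmat_deriv dims (Wt t) Wd L 0 j" for j
  have hP: "((\<lambda>s. prodmat dims (Wt s) L 0 j) has_real_derivative dP j) (at t within S)" for j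
    unfolding dP_def by (rule prodmat_has_derivative[OF WD]) (use dL in auto)
  have hc: "((\<lambda>s. margin (Wt s) i) has_real_derivative (\<Sum>j<dims 0. dP j * zvec x y i j)) (at t within S)" for i
    unfolding margin_def by (intro DERIV_sum DERIV_cmult_right hP)
  have hl: "((\<lambda>s. loss (margin (Wt s) i)) has_real_derivative
      deriv loss (margin (Wt t) i) * (\<Sum>j<dims 0. dP j * zvec x y i j)) (at t within S)" for i
    by (rule DERIV_chain2[OF loss_has_deriv hc])
  have "((\<lambda>s. Risk (Wt s)) has_real_derivative
      (1 / real n) * (\<Sum>i<n. deriv loss (margin (Wt t) i) * (\<Sum>j<dims 0. dP j * zvec x y i j))) (at t within S)"
    unfolding risk_eq_margin by (intro DERIV_cmult DERIV_sum hl)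
  also have "(1 / real n) * (\<Sum>i<n. deriv loss (margin (Wt t) i) * (\<Sum>j<dims 0. dP j * zvec x y i j))
      = (\<Sum>j<dims 0. dP j * wgrad (Wt t) j)"
    unfolding wgrad_def by (simp add: sum_distrib_left sum_distrib_right algebra_simps sum.swap[of _ "{..<n}"])
  also have "\<dots> = (\<Sum>j<dims 0. wgrad (Wt t) j * dP j)" by (simp add: mult.commute)
  also have "\<dots> = (\<Sum>m<L. \<Sum>a<dims (Suc m). \<Sum>b<dims m. grad (Wt t) (Suc m) a b * Wd (Suc m) a b)"
    unfolding dP_def prodmat_deriv_def sum_mult_sum3_swap grad_def lower_grad_def upper_row_def
    by (intro sum.cong refl) (simp add: sum_distrib_left sum_distrib_right algebra_simps)
  finally show ?thesis .
qed

end

section \<open>Gradient flow and balancedness\<close>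

locale grad_flow = linear_net +
  fixes Wt :: "real \<Rightarrow> net"
  assumes dims_L: "dims L = 1" and depth: "2 \<le> L"
    and flow: "\<forall>t\<ge>0. \<forall>k\<in>{1..L}. \<forall>i<dims k. \<forall>j<dims (k - 1).
                 ((\<lambda>s. Wt s k i j) has_real_derivative
                    - grad_entry (risk loss n x y dims L) (Wt t) k i j) (at t within {0..})"
begin

lemma flow_has_derivative:
  "t \<ge> 0 \<Longrightarrow> k \<in> {1..L} \<Longrightarrow> i < dims k \<Longrightarrow> j < dims (k - 1) \<Longrightarrow>
   ((\<lambda>s. Wt s k i j) has_real_derivative - grad (Wt t) k i j) (at t within {0..})"
  using flow grad_entry_risk_eq_grad by metis

lemma risk_flow_deriv:
  assumes "t \<ge> 0"
  shows "((\<lambda>s. Risk (Wt s)) has_real_derivative - grad_sqnorm (Wt t)) (at t within {0..})"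
proof -
  have "((\<lambda>s. Risk (Wt s)) has_real_derivative
     (\<Sum>m<L. \<Sum>a<dims (Suc m). \<Sum>b<dims m. grad (Wt t) (Suc m) a b * - grad (Wt t) (Suc m) a b))
     (at t within {0..})"
    by (rule risk_has_derivative) (use flow_has_derivative assms dims_L in auto)
  then show ?thesis by (simp add: grad_sqnorm_def power2_eq_square sum_negf)
qed

lemma grad_sqnorm_nonneg: "grad_sqnorm W \<ge> 0"
  unfolding grad_sqnorm_def by (intro sum_nonneg) auto

lemma risk_antimono: "0 \<le> s \<Longrightarrow> s \<le> t \<Longrightarrow> Risk (Wt t) \<le> Risk (Wt s)"
  by (rule deriv_nonpos_imp_antimono[of 0 _ "\<lambda>t. - grad_sqnorm (Wt t)"])
     (use risk_flow_deriv grad_sqnorm_nonneg in auto)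

lemma balance_const:
  assumes k: "1 \<le> k" "Suc k \<le> L" and bc: "b < dims k" "c < dims k" and "t \<ge> 0"
  shows "balance dims (Wt t) k b c = balance dims (Wt 0) k b c"
proof -
  have deriv0: "((\<lambda>s. balance dims (Wt s) k b c) has_real_derivative 0) (at t within {0..})"
    if "t \<ge> 0" for t
  proof -
    let ?W = "Wt t"
    have "((\<lambda>s. balance dims (Wt s) k b c) has_real_derivative
        (\<Sum>a<dims (Suc k). - grad ?W (Suc k) a b * ?W (Suc k) a c + - grad ?W (Suc k) a c * ?W (Suc k) a b)
        - (\<Sum>e<dims (k - 1). - grad ?W k b e * ?W k c e + - grad ?W k c e * ?W k b e))
        (at t within {0..})"
      unfolding balance_def
      by (intro DERIV_diff DERIV_sum DERIV_mult flow_has_derivative) (use that k bc in auto)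
    moreover have "(\<Sum>a<dims (Suc k). - grad ?W (Suc k) a b * ?W (Suc k) a c + - grad ?W (Suc k) a c * ?W (Suc k) a b)
        = - (lower_grad ?W k b * upper_row ?W k c) - lower_grad ?W k c * upper_row ?W k b"
      using grad_mult_upper[OF k(2) _ ] bc dims_L
      by (simp only: mult_minus_left sum.distrib sum_negf diff_conv_add_uminus)
    moreover have "(\<Sum>e<dims (k - 1). - grad ?W k b e * ?W k c e + - grad ?W k c e * ?W k b e)
        = - (upper_row ?W k b * lower_grad ?W k c) - upper_row ?W k c * lower_grad ?W k b"
      using grad_mult_lower[OF k(1)] by (simp only: mult_minus_left sum.distrib sum_negf diff_conv_add_uminus)
    ultimately show ?thesis by simp
  qed
  have "\<exists>C. \<forall>t\<in>{0..}. balance dims (Wt t) k b c = C"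
    by (rule has_field_derivative_zero_constant) (use deriv0 in auto)
  then show ?thesis using \<open>t \<ge> 0\<close> by auto
qed

lemma fro2_diff_const:
  "k \<in> {1..L} \<Longrightarrow> t \<ge> 0 \<Longrightarrow>
   fro2 dims (Wt t) k - fro2 dims (Wt t) 1 = fro2 dims (Wt 0) k - fro2 dims (Wt 0) 1"
proof (induction k)
  case (Suc k)
  show ?case
  proof (cases "k = 0")
    case False
    then have k: "1 \<le> k" "Suc k \<le> L" using Suc.prems by auto
    have "fro2 dims (Wt t) (Suc k) - fro2 dims (Wt t) k = fro2 dims (Wt 0) (Suc k) - fro2 dims (Wt 0) k"
      unfolding fro2_Suc_diff using balance_const[OF k _ _ Suc.prems(2)] by simp
    then show ?thesis using Suc k by simp
  qed simp
qed simp

end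

section \<open>Convergence of the risk\<close>

locale separable_flow = grad_flow +
  assumes labels: "\<forall>i<n. y i = -1 \<or> y i = 1"
    and xbound: "\<forall>i<n. vnorm (dims 0) (x i) \<le> 1"
    and separable: "\<exists>w. vnorm (dims 0) w = 1 \<and> (\<forall>i<n. vinner (dims 0) w (zvec x y i) > 0)"
    and loss_C1: "continuous_on UNIV (deriv loss)"
    and loss_dec: "\<forall>s. deriv loss s < 0"
    and loss_bot: "filterlim loss at_top at_bot"
    and loss_top: "(loss \<longlongrightarrow> 0) at_top"
    and init_grad: "\<exists>k\<in>{1..L}. \<exists>i<dims k. \<exists>j<dims (k - 1).
                 grad_entry (risk loss n x y dims L) (Wt 0) k i j \<noteq> 0"
    and init_risk: "risk loss n x y dims L (Wt 0) \<le> loss 0"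
begin

lemma loss_strict_antimono: "s < t \<Longrightarrow> loss t < loss s"
  by (rule DERIV_neg_imp_decreasing[of s t loss]) (use loss_has_deriv loss_dec in blast)+

lemma loss_antimono: "s \<le> t \<Longrightarrow> loss t \<le> loss s"
  using loss_strict_antimono[of s t] by (cases "s = t") auto

lemma loss_pos: "loss s > 0"
proof -
  have "0 \<le> loss (s + 1)"
  proof (rule tendsto_upperbound[OF loss_top])
    show "\<forall>\<^sub>F t in at_top. loss t \<le> loss (s + 1)"
      using eventually_ge_at_top[of "s + 1"] by eventually_elim (rule loss_antimono)
  qed simp
  then show ?thesis using loss_strict_antimono[of s "s + 1"] by simp
qed

lemma data_nonempty: "n > 0"
proof (rule ccontr)
  assume "\<not> n > 0"
  then have "wgrad W j = 0" for W j
    unfolding wgrad_def by simp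
  then have "lower_grad W m b = 0" for W m b
    by (simp add: lower_grad_def)
  then have "grad W k i j = 0" for W k i j
    by (simp add: grad_def)
  then show False using init_grad grad_entry_risk_eq_grad by metis
qed

lemma sum_loss_margin: "(\<Sum>i<n. loss (margin W i)) = real n * Risk W"
  unfolding risk_eq_margin using data_nonempty by simp

lemma loss_margin_le: "i < n \<Longrightarrow> loss (margin W i) \<le> real n * Risk W"
  unfolding sum_loss_margin[symmetric]
  by (rule member_le_sum) (use loss_pos in \<open>auto intro: less_imp_le\<close>)

lemma risk_nonneg: "Risk W \<ge> 0"
  unfolding risk_eq_margin using loss_pos by (intro mult_nonneg_nonneg sum_nonneg) (auto intro: less_imp_le)

lemma margin_le_wprod_norm: "i < n \<Longrightarrow> margin W i \<le> vnorm (dims 0) (wprod dims L W)"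
proof -
  assume "i < n"
  have "(y i)\<^sup>2 = 1" using labels \<open>i < n\<close> by auto
  then have "vnorm (dims 0) (zvec x y i) = vnorm (dims 0) (x i)"
    by (simp add: vnorm_def zvec_def power_mult_distrib)
  then have z: "vnorm (dims 0) (zvec x y i) \<le> 1" using xbound \<open>i < n\<close> by simp
  have "margin W i \<le> vnorm (dims 0) (wprod dims L W) * vnorm (dims 0) (zvec x y i)"
    using vinner_le[of "dims 0" "wprod dims L W" "zvec x y i"]
    by (simp add: margin_def vinner_def wprod_def)
  also have "\<dots> \<le> vnorm (dims 0) (wprod dims L W)"
    using z vnorm_nonneg[of "dims 0" "wprod dims L W"] by (simp add: mult_left_le)
  finally show ?thesis .
qed

lemma wprod_eq_upper_row: "j < dims 0 \<Longrightarrow> wprod dims L W j = (\<Sum>a<dims 1. upper_row W 1 a * W 1 a j)"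
  using upper_row_Suc[of 0 j W] depth dims_L
  by (simp add: wprod_def upper_row_def prodmat_eq_segprod)

lemma wprod_norm_le: "vnorm (dims 0) (wprod dims L W) \<le> vnorm (dims 1) (upper_row W 1) * frob dims W 1"
proof -
  have "(\<Sum>j<dims 0. (wprod dims L W j)\<^sup>2)
      \<le> (\<Sum>j<dims 0. (\<Sum>a<dims 1. (upper_row W 1 a)\<^sup>2) * (\<Sum>a<dims 1. (W 1 a j)\<^sup>2))"
    by (intro sum_mono) (simp add: wprod_eq_upper_row Cauchy_Schwarz_ineq_sum)
  also have "\<dots> = (\<Sum>a<dims 1. (upper_row W 1 a)\<^sup>2) * fro2 dims W 1"
    unfolding fro2_def by (simp add: sum_distrib_left sum.swap[of _ "{..<dims 0}"])
  finally show ?thesis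
    unfolding vnorm_def frob_eq_sqrt_fro2 by (metis real_sqrt_le_iff real_sqrt_mult)
qed

lemma grad_layer1_sqnorm_le: "(\<Sum>a<dims 1. \<Sum>b<dims 0. (grad W 1 a b)\<^sup>2) \<le> grad_sqnorm W"
proof -
  have "(\<Sum>a<dims 1. \<Sum>b<dims 0. (grad W 1 a b)\<^sup>2)
      = (\<Sum>m\<in>{0}. \<Sum>a<dims (Suc m). \<Sum>b<dims m. (grad W (Suc m) a b)\<^sup>2)"
    by simp
  also have "\<dots> \<le> grad_sqnorm W"
    unfolding grad_sqnorm_def by (intro sum_mono2) (use depth in \<open>auto intro!: sum_nonneg\<close>)
  finally show ?thesis .
qed

lemma grad_sqnorm_ge:
  "(vnorm (dims 1) (upper_row W 1) * vnorm (dims 0) (wgrad W))\<^sup>2 \<le> grad_sqnorm W"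
proof -
  have lower_grad_0: "lower_grad W 0 b = wgrad W b" if "b < dims 0" for b
  proof -
    have "lower_grad W 0 b = (\<Sum>j<dims 0. (if j = b then 1 else 0) * wgrad W j)"
      unfolding lower_grad_def by (intro sum.cong refl) auto
    then show ?thesis using sum_indicator_mult[OF that] by simp
  qed
  have "(vnorm (dims 1) (upper_row W 1) * vnorm (dims 0) (wgrad W))\<^sup>2
      = (\<Sum>a<dims 1. \<Sum>b<dims 0. (grad W 1 a b)\<^sup>2)"
    by (simp add: vnorm_sq power_mult_distrib grad_def lower_grad_0 sum_product)
  then show ?thesis using grad_layer1_sqnorm_le by simp
qed

lemma frob_grad_ge:
  "vnorm (dims 0) (wprod dims L W) * vnorm (dims 0) (wgrad W) \<le> frob dims W 1 * sqrt (grad_sqnorm W)"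
proof -
  have "vnorm (dims 0) (wprod dims L W) * vnorm (dims 0) (wgrad W)
      \<le> frob dims W 1 * (vnorm (dims 1) (upper_row W 1) * vnorm (dims 0) (wgrad W))"
    using mult_right_mono[OF wprod_norm_le[of W] vnorm_nonneg[of "dims 0" "wgrad W"]]
    by (simp add: mult_ac)
  also have "\<dots> \<le> frob dims W 1 * sqrt (grad_sqnorm W)"
    using grad_sqnorm_ge[of W] vnorm_nonneg
    by (intro mult_left_mono real_le_rsqrt) (auto simp: frob_eq_sqrt_fro2 fro2_nonneg)
  finally show ?thesis .
qed

lemma fro2_1_flow_deriv:
  assumes "t \<ge> 0"
  shows "((\<lambda>s. fro2 dims (Wt s) 1) has_real_derivative
          (\<Sum>a<dims 1. \<Sum>b<dims 0. 2 * Wt t 1 a b * - grad (Wt t) 1 a b)) (at t within {0..})"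
  unfolding fro2_def using assms depth
  by (auto intro!: DERIV_sum derivative_eq_intros flow_has_derivative)

lemma fro2_1_flow_deriv_le:
  "(\<Sum>a<dims 1. \<Sum>b<dims 0. 2 * W 1 a b * - grad W 1 a b)
     \<le> 2 * sqrt (fro2 dims W 1) * sqrt (grad_sqnorm W)"
proof -
  have "(\<Sum>a<dims 1. \<Sum>b<dims 0. W 1 a b * - grad W 1 a b)
      \<le> sqrt (fro2 dims W 1) * sqrt (\<Sum>a<dims 1. \<Sum>b<dims 0. (grad W 1 a b)\<^sup>2)"
    using double_sum_mult_le_sqrt_sum_squares[of "\<lambda>a b. W 1 a b" "\<lambda>a b. - grad W 1 a b"]
    by (simp add: fro2_def)
  also have "\<dots> \<le> sqrt (fro2 dims W 1) * sqrt (grad_sqnorm W)"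
    using grad_layer1_sqnorm_le by (simp add: fro2_nonneg mult_left_mono)
  finally have "(\<Sum>a<dims 1. \<Sum>b<dims 0. W 1 a b * - grad W 1 a b)
      \<le> sqrt (fro2 dims W 1) * sqrt (grad_sqnorm W)" .
  moreover have "(\<Sum>a<dims 1. \<Sum>b<dims 0. 2 * W 1 a b * - grad W 1 a b)
      = 2 * (\<Sum>a<dims 1. \<Sum>b<dims 0. W 1 a b * - grad W 1 a b)"
    by (simp add: sum_distrib_left mult.assoc)
  ultimately show ?thesis by simp
qed

definition sep_dir :: "nat \<Rightarrow> real" where
  "sep_dir = (SOME w. vnorm (dims 0) w = 1 \<and> (\<forall>i<n. vinner (dims 0) w (zvec x y i) > 0))"

definition sep_margin :: real where
  "sep_margin = Min ((\<lambda>i. vinner (dims 0) sep_dir (zvec x y i)) ` {..<n})"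

lemma sep_dir: "vnorm (dims 0) sep_dir = 1" "i < n \<Longrightarrow> vinner (dims 0) sep_dir (zvec x y i) > 0"
  using someI_ex[OF separable] unfolding sep_dir_def[symmetric] by auto

lemma sep_margin_le: "i < n \<Longrightarrow> sep_margin \<le> vinner (dims 0) sep_dir (zvec x y i)"
  unfolding sep_margin_def by (rule Min_le) auto

lemma sep_margin_pos: "sep_margin > 0"
proof -
  have "sep_margin \<in> (\<lambda>i. vinner (dims 0) sep_dir (zvec x y i)) ` {..<n}"
    unfolding sep_margin_def using data_nonempty by (intro Min_in) auto
  then show ?thesis using sep_dir(2) by auto
qed

text \<open>Pairing the gradient with the separating direction: every summand of
  \<open>\<langle>-wgrad W, sep_dir\<rangle>\<close> is nonnegative, and the one of index \<open>i0\<close> is at least \<open>\<kappa> \<cdot> sep_margin / n\<close>.\<close>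

lemma wgrad_norm_ge:
  assumes "i0 < n" "\<kappa> \<le> - deriv loss (margin W i0)" "\<kappa> \<ge> 0"
  shows "sep_margin * \<kappa> / real n \<le> vnorm (dims 0) (wgrad W)"
proof -
  let ?c = "\<lambda>i. - deriv loss (margin W i) * vinner (dims 0) sep_dir (zvec x y i)"
  have c_nonneg: "0 \<le> ?c i" if "i < n" for i
    using sep_dir(2)[OF that] loss_dec by (intro mult_nonneg_nonneg) (auto intro: less_imp_le)
  have "sep_margin * \<kappa> \<le> ?c i0"
    using mult_mono[OF assms(2) sep_margin_le[OF assms(1)]] sep_margin_pos loss_dec
    by (simp add: mult.commute less_imp_le)
  also have "\<dots> \<le> (\<Sum>i<n. ?c i)"
    by (rule member_le_sum) (use assms(1) c_nonneg in auto)
  finally have "sep_margin * \<kappa> / real n \<le> (1 / real n) * (\<Sum>i<n. ?c i)"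
    by (simp add: divide_right_mono)
  also have "\<dots> = vinner (dims 0) (\<lambda>j. - wgrad W j) sep_dir"
    unfolding wgrad_def vinner_def
    by (simp add: sum_distrib_left sum_distrib_right sum_negf algebra_simps sum.swap[of _ "{..<n}"])
  also have "\<dots> \<le> vnorm (dims 0) (wgrad W)"
    using vinner_le[of "dims 0" "\<lambda>j. - wgrad W j" sep_dir] sep_dir(1) by (simp add: vnorm_def)
  finally show ?thesis .
qed

lemma loss_deriv_bounded_away: "\<exists>\<kappa>>0. \<forall>s\<in>{a..b}. \<kappa> \<le> - deriv loss s"
proof (cases "{a..b} = {}")
  case False
  have "continuous_on {a..b} (\<lambda>s. - deriv loss s)"
    using loss_C1 by (intro continuous_intros) (auto intro: continuous_on_subset)
  from continuous_attains_inf[OF compact_Icc False this] obtain s0 where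
    "s0 \<in> {a..b}" "\<forall>s\<in>{a..b}. - deriv loss s0 \<le> - deriv loss s" by blast
  then show ?thesis using loss_dec by (intro exI[of _ "- deriv loss s0"]) auto
qed (intro exI[of _ 1], auto)

lemma margin_gt_if_risk_le:
  assumes "real n * loss 0 < loss m" "Risk W \<le> loss 0" "i < n"
  shows "m < margin W i"
proof (rule ccontr)
  assume "\<not> m < margin W i"
  then have "loss m \<le> loss (margin W i)" by (simp add: loss_antimono)
  also have "\<dots> \<le> real n * loss 0"
    using loss_margin_le[OF assms(3), of W] mult_left_mono[OF assms(2), of "real n"] by simp
  finally show False using assms(1) by simp
qed

lemma exists_margin_lt_if_risk_gt:
  assumes "loss M < Risk W"
  obtains i where "i < n" "margin W i < M"
proof (rule ccontr)
  assume "\<not> thesis"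
  then have "\<forall>i<n. M \<le> margin W i" using that by (meson not_le)
  then have "loss (margin W i) \<le> loss M" if "i < n" for i
    using that loss_antimono by blast
  then have "(\<Sum>i<n. loss (margin W i)) \<le> real n * loss M"
    using sum_mono[of "{..<n}" "\<lambda>i. loss (margin W i)" "\<lambda>_. loss M"] by simp
  then show False using assms data_nonempty by (simp add: sum_loss_margin)
qed

lemma wprod_norm_gt_if_risk_lt:
  assumes "Risk W < loss \<delta>"
  shows "\<delta> < vnorm (dims 0) (wprod dims L W)"
proof -
  obtain i where i: "i < n" "loss (margin W i) < loss \<delta>"
  proof (rule ccontr)
    assume "\<not> thesis"
    then have "\<forall>i<n. loss \<delta> \<le> loss (margin W i)" using that by (meson not_le)
    then have "real n * loss \<delta> \<le> (\<Sum>i<n. loss (margin W i))"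
      using sum_mono[of "{..<n}" "\<lambda>_. loss \<delta>" "\<lambda>i. loss (margin W i)"] by simp
    then show False using assms data_nonempty by (simp add: sum_loss_margin)
  qed
  then have "\<delta> < margin W i" using loss_antimono by (meson not_le)
  then show ?thesis using margin_le_wprod_norm[OF i(1), of W] by linarith
qed

lemma frob_grad_lower_bound:
  assumes "0 < \<delta>" "Risk W < loss \<delta>" "Risk W \<le> loss 0" "real n * loss 0 < loss m" "loss M < Risk W"
    and "\<kappa> > 0" "\<forall>s\<in>{m..M}. \<kappa> \<le> - deriv loss s"
  shows "\<delta> * (sep_margin * \<kappa> / real n) \<le> frob dims W 1 * sqrt (grad_sqnorm W)"
    and "0 < fro2 dims W 1"
proof -
  obtain i where i: "i < n" "margin W i < M"
    using exists_margin_lt_if_risk_gt[OF assms(5)] .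
  have "m < margin W i" by (rule margin_gt_if_risk_le[OF assms(4,3) i(1)])
  then have "sep_margin * \<kappa> / real n \<le> vnorm (dims 0) (wgrad W)"
    using i assms(6,7) by (intro wgrad_norm_ge[OF i(1)]) auto
  moreover have wprod: "\<delta> < vnorm (dims 0) (wprod dims L W)"
    by (rule wprod_norm_gt_if_risk_lt[OF assms(2)])
  ultimately have "\<delta> * (sep_margin * \<kappa> / real n) \<le> vnorm (dims 0) (wprod dims L W) * vnorm (dims 0) (wgrad W)"
    using assms(1,6) sep_margin_pos data_nonempty by (intro mult_mono) auto
  then show "\<delta> * (sep_margin * \<kappa> / real n) \<le> frob dims W 1 * sqrt (grad_sqnorm W)"
    using frob_grad_ge by (rule order_trans)
  have "0 < vnorm (dims 1) (upper_row W 1) * frob dims W 1"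
    using wprod wprod_norm_le[of W] assms(1) by simp
  then show "0 < fro2 dims W 1"
    using vnorm_nonneg[of "dims 1" "upper_row W 1"] fro2_nonneg[of dims W 1]
    by (auto simp: frob_eq_sqrt_fro2 zero_less_mult_iff)
qed

lemma risk_decreases_initially: "\<exists>t0>0. Risk (Wt t0) < Risk (Wt 0)"
proof -
  obtain k i j where kij: "k \<in> {1..L}" "i < dims k" "j < dims (k - 1)" "grad (Wt 0) k i j \<noteq> 0"
    using init_grad grad_entry_risk_eq_grad by metis
  obtain m where m: "k = Suc m" using kij by (cases k) auto
  have "0 < (grad (Wt 0) (Suc m) i j)\<^sup>2" using kij m by simp
  also have "\<dots> \<le> (\<Sum>b<dims m. (grad (Wt 0) (Suc m) i b)\<^sup>2)"
    by (rule member_le_sum) (use kij m in auto)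
  also have "\<dots> \<le> (\<Sum>a<dims (Suc m). \<Sum>b<dims m. (grad (Wt 0) (Suc m) a b)\<^sup>2)"
    by (rule member_le_sum[where f = "\<lambda>a. \<Sum>b<dims m. (grad (Wt 0) (Suc m) a b)\<^sup>2"])
       (use kij m in \<open>auto intro: sum_nonneg\<close>)
  also have "\<dots> \<le> grad_sqnorm (Wt 0)"
    unfolding grad_sqnorm_def
    by (rule member_le_sum[where f = "\<lambda>m. \<Sum>a<dims (Suc m). \<Sum>b<dims m. (grad (Wt 0) (Suc m) a b)\<^sup>2"])
       (use kij m in \<open>auto intro!: sum_nonneg\<close>)
  finally have "- grad_sqnorm (Wt 0) < 0" by simp
  from has_real_derivative_neg_dec_right[OF risk_flow_deriv[of 0] this] obtain d where
    "d > 0" "\<forall>h>0. 0 + h \<in> {0..} \<longrightarrow> h < d \<longrightarrow> Risk (Wt 0) > Risk (Wt (0 + h))" by auto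
  then show ?thesis by (intro exI[of _ "d / 2"]) auto
qed

lemma no_uniform_frob_grad_bound:
  assumes K: "K > 0" and t0: "t0 \<ge> 0"
    and bound: "\<And>t. t0 \<le> t \<Longrightarrow>
                  K \<le> frob dims (Wt t) 1 * sqrt (grad_sqnorm (Wt t)) \<and> 0 < fro2 dims (Wt t) 1"
  shows False
proof -
  have within: "{t0..} \<subseteq> {0::real..}" using t0 by auto
  define B where "B = exp (ln (fro2 dims (Wt t0) 1) + 2 / K * Risk (Wt t0))"
  have fro2_le: "fro2 dims (Wt t) 1 \<le> B" if "t0 \<le> t" for t
    unfolding B_def
  proof (rule ln_descent_bound[OF K _ _ _ _ _ fro2_1_flow_deriv_le _ that])
    fix t assume "t0 \<le> t"
    show "((\<lambda>s. fro2 dims (Wt s) 1) has_real_derivative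
                 (\<Sum>a<dims 1. \<Sum>b<dims 0. 2 * Wt t 1 a b * - grad (Wt t) 1 a b)) (at t within {t0..})"
      by (rule DERIV_subset[OF fro2_1_flow_deriv within]) (use t0 \<open>t0 \<le> t\<close> in auto)
    show "((\<lambda>s. Risk (Wt s)) has_real_derivative - grad_sqnorm (Wt t)) (at t within {t0..})"
      by (rule DERIV_subset[OF risk_flow_deriv within]) (use t0 \<open>t0 \<le> t\<close> in auto)
    show "0 < fro2 dims (Wt t) 1" "K \<le> sqrt (fro2 dims (Wt t) 1) * sqrt (grad_sqnorm (Wt t))"
      using bound[OF \<open>t0 \<le> t\<close>] by (simp_all add: frob_eq_sqrt_fro2)
  qed (use grad_sqnorm_nonneg risk_nonneg in auto)
  have "B > 0" unfolding B_def by simp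
  have "K\<^sup>2 / B \<le> grad_sqnorm (Wt t)" if "t0 \<le> t" for t
  proof -
    have "K\<^sup>2 \<le> (frob dims (Wt t) 1 * sqrt (grad_sqnorm (Wt t)))\<^sup>2"
      using bound[OF that] K by (intro power_mono) auto
    also have "\<dots> = fro2 dims (Wt t) 1 * grad_sqnorm (Wt t)"
      using fro2_nonneg grad_sqnorm_nonneg by (simp add: frob_eq_sqrt_fro2 power_mult_distrib)
    also have "\<dots> \<le> B * grad_sqnorm (Wt t)"
      using fro2_le[OF that] grad_sqnorm_nonneg by (simp add: mult_right_mono)
    finally show ?thesis using \<open>B > 0\<close> by (simp add: divide_le_eq mult.commute)
  qed
  moreover have "((\<lambda>s. Risk (Wt s)) has_real_derivative - grad_sqnorm (Wt t)) (at t within {t0..})"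
    if "t0 \<le> t" for t
    by (rule DERIV_subset[OF risk_flow_deriv within]) (use that t0 in auto)
  ultimately show False
    using nonneg_no_uniform_descent[of "K\<^sup>2 / B" t0 "\<lambda>t. Risk (Wt t)" "\<lambda>t. grad_sqnorm (Wt t)"]
      K \<open>B > 0\<close> risk_nonneg by force
qed

lemma risk_eventually_lt:
  assumes "\<epsilon> > 0"
  shows "\<exists>t\<ge>0. Risk (Wt t) < \<epsilon>"
proof (rule ccontr)
  assume "\<not> ?thesis"
  then have risk_ge: "\<epsilon> \<le> Risk (Wt t)" if "t \<ge> 0" for t
    using that by (auto simp: not_less)
  obtain t0 where t0: "t0 > 0" "Risk (Wt t0) < Risk (Wt 0)"
    using risk_decreases_initially by blast
  obtain \<delta> where \<delta>: "\<delta> > 0" "Risk (Wt t0) < loss \<delta>"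
  proof -
    have "Risk (Wt t0) < loss 0" using t0 init_risk by simp
    then have "\<forall>\<^sub>F s in at 0. Risk (Wt t0) < loss s"
      by (rule order_tendstoD(1)[OF DERIV_isCont[OF loss_has_deriv, of 0, unfolded isCont_def]])
    then obtain d where "d > 0" "\<forall>s. s \<noteq> 0 \<and> dist s 0 < d \<longrightarrow> Risk (Wt t0) < loss s"
      unfolding eventually_at by auto
    then show ?thesis using that[of "d / 2"] by (auto simp: dist_real_def)
  qed
  obtain m where m: "real n * loss 0 < loss m"
  proof -
    obtain N where "\<forall>s\<le>N. real n * loss 0 + 1 \<le> loss s"
      using loss_bot unfolding filterlim_at_top eventually_at_bot_linorder by blast
    then show ?thesis using that[of N] by force
  qed
  obtain M where M: "loss M < \<epsilon>"
    using order_tendstoD(2)[OF loss_top \<open>\<epsilon> > 0\<close>] unfolding eventually_at_top_linorder by blast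
  obtain \<kappa> where \<kappa>: "\<kappa> > 0" "\<forall>s\<in>{m..M}. \<kappa> \<le> - deriv loss s"
    using loss_deriv_bounded_away by blast
  define K where "K = \<delta> * (sep_margin * \<kappa> / real n)"
  have K: "K > 0" unfolding K_def using \<delta> \<kappa> sep_margin_pos data_nonempty by simp
  have bound: "K \<le> frob dims (Wt t) 1 * sqrt (grad_sqnorm (Wt t)) \<and> 0 < fro2 dims (Wt t) 1"
    if "t0 \<le> t" for t
  proof -
    have "Risk (Wt t) < loss \<delta>" "Risk (Wt t) \<le> loss 0" "loss M < Risk (Wt t)"
      using risk_antimono[of t0 t] risk_antimono[of 0 t] risk_ge[of t] that t0 \<delta> init_risk M by auto
    then show ?thesis
      using frob_grad_lower_bound[OF \<delta>(1) _ _ m _ \<kappa>] unfolding K_def by blast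
  qed
  show False by (rule no_uniform_frob_grad_bound[OF K _ bound, of t0]) (use t0 in simp)
qed

lemma risk_tendsto_0: "((\<lambda>t. Risk (Wt t)) \<longlongrightarrow> 0) at_top"
proof (rule order_tendstoI)
  fix a :: real assume "a < 0"
  then show "\<forall>\<^sub>F t in at_top. a < Risk (Wt t)"
    using risk_nonneg by (intro always_eventually allI) (auto intro: less_le_trans)
next
  fix a :: real assume "0 < a"
  then obtain t1 where t1: "t1 \<ge> 0" "Risk (Wt t1) < a" using risk_eventually_lt by blast
  show "\<forall>\<^sub>F t in at_top. Risk (Wt t) < a"
    using eventually_ge_at_top[of t1]
    by eventually_elim (use t1 risk_antimono in \<open>auto intro: le_less_trans\<close>)
qed

lemma margin_tendsto_infinity: "i < n \<Longrightarrow> filterlim (\<lambda>t. margin (Wt t) i) at_top at_top"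
  unfolding filterlim_at_top
proof
  fix B :: real
  assume "i < n"
  have "\<forall>\<^sub>F t in at_top. Risk (Wt t) < loss B / real n"
    using order_tendstoD(2)[OF risk_tendsto_0] loss_pos data_nonempty by simp
  then show "\<forall>\<^sub>F t in at_top. B \<le> margin (Wt t) i"
  proof eventually_elim
    case (elim t)
    then have "loss (margin (Wt t) i) < loss B"
      using loss_margin_le[OF \<open>i < n\<close>, of "Wt t"] data_nonempty by (simp add: field_simps)
    then show ?case using loss_antimono[of "margin (Wt t) i" B] by linarith
  qed
qed

lemma wprod_norm_tendsto_infinity:
  "filterlim (\<lambda>t. vnorm (dims 0) (wprod dims L (Wt t))) at_top at_top"
  by (rule filterlim_at_top_mono[OF margin_tendsto_infinity[OF data_nonempty]])
     (use margin_le_wprod_norm data_nonempty in auto)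

subsection \<open>Divergence of the layer norms\<close>

lemma dims_0_pos: "dims 0 > 0"
  by (rule ccontr) (use separable in \<open>auto simp: vnorm_def\<close>)

lemma wprod_norm_le_prod_frob:
  "vnorm (dims 0) (wprod dims L W) \<le> sqrt (real (dims 0)) * (\<Prod>k\<in>{1..L}. frob dims W k)"
proof -
  have "(\<Sum>j<dims 0. (wprod dims L W j)\<^sup>2) \<le> real (dims 0) * (\<Prod>k\<in>{1..L}. fro2 dims W k)"
    using prodmat_sqnorm_le[where dims = dims and m = L and W = W] dims_L by (simp add: wprod_def)
  then have "vnorm (dims 0) (wprod dims L W) \<le> sqrt (real (dims 0) * (\<Prod>k\<in>{1..L}. fro2 dims W k))"
    unfolding vnorm_def by simp
  then show ?thesis by (simp add: real_sqrt_mult real_sqrt_prod frob_eq_sqrt_fro2)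
qed

lemma frob_le_frob_add:
  assumes "j \<in> {1..L}" "k \<in> {1..L}" "t \<ge> 0"
  shows "frob dims (Wt t) k \<le> frob dims (Wt t) j + sqrt \<bar>fro2 dims (Wt 0) k - fro2 dims (Wt 0) j\<bar>"
proof -
  have "fro2 dims (Wt t) k = fro2 dims (Wt t) j + (fro2 dims (Wt 0) k - fro2 dims (Wt 0) j)"
    using fro2_diff_const[OF assms(2,3)] fro2_diff_const[OF assms(1,3)] by simp
  then have "frob dims (Wt t) k \<le> sqrt (fro2 dims (Wt t) j + \<bar>fro2 dims (Wt 0) k - fro2 dims (Wt 0) j\<bar>)"
    by (simp add: frob_eq_sqrt_fro2)
  also have "\<dots> \<le> frob dims (Wt t) j + sqrt \<bar>fro2 dims (Wt 0) k - fro2 dims (Wt 0) j\<bar>"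
    unfolding frob_eq_sqrt_fro2 by (rule sqrt_add_le_add_sqrt) (auto simp: fro2_nonneg)
  finally show ?thesis .
qed

text \<open>By the balancedness, all layers have Frobenius norms within a constant of each other, so
  the bound \<open>\<parallel>w\<^sub>p\<^sub>r\<^sub>o\<^sub>d\<parallel> \<le> \<surd>d\<^sub>0 \<Prod> \<parallel>W\<^sub>k\<parallel>\<^sub>F\<close> forces each of them to infinity.\<close>

lemma frob_tendsto_infinity:
  assumes j: "j \<in> {1..L}"
  shows "filterlim (\<lambda>t. frob dims (Wt t) j) at_top at_top"
proof -
  define C where "C = (\<Sum>k\<in>{1..L}. sqrt \<bar>fro2 dims (Wt 0) k - fro2 dims (Wt 0) j\<bar>)"
  have "C \<ge> 0" unfolding C_def by (auto intro: sum_nonneg)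
  have frob_le: "frob dims (Wt t) k \<le> frob dims (Wt t) j + C" if "k \<in> {1..L}" "t \<ge> 0" for k t
  proof -
    have "sqrt \<bar>fro2 dims (Wt 0) k - fro2 dims (Wt 0) j\<bar> \<le> C"
      unfolding C_def by (rule member_le_sum) (use that in auto)
    then show ?thesis using frob_le_frob_add[OF j that] by simp
  qed
  have wprod_le: "vnorm (dims 0) (wprod dims L (Wt t)) \<le> sqrt (real (dims 0)) * (frob dims (Wt t) j + C) ^ L"
    if "t \<ge> 0" for t
  proof -
    have "(\<Prod>k\<in>{1..L}. frob dims (Wt t) k) \<le> (\<Prod>k\<in>{1..L}. frob dims (Wt t) j + C)"
      by (intro prod_mono) (use frob_le that fro2_nonneg in \<open>auto simp: frob_eq_sqrt_fro2\<close>)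
    then show ?thesis
      using wprod_norm_le_prod_frob[of "Wt t"] by (simp add: mult_left_mono order_trans)
  qed
  show ?thesis unfolding filterlim_at_top
  proof
    fix B :: real
    have "\<forall>\<^sub>F t in at_top. sqrt (real (dims 0)) * (max B 0 + C) ^ L < vnorm (dims 0) (wprod dims L (Wt t))"
      using wprod_norm_tendsto_infinity unfolding filterlim_at_top_dense by blast
    then show "\<forall>\<^sub>F t in at_top. B \<le> frob dims (Wt t) j"
      using eventually_ge_at_top[of 0]
    proof eventually_elim
      case (elim t)
      then have "sqrt (real (dims 0)) * (max B 0 + C) ^ L < sqrt (real (dims 0)) * (frob dims (Wt t) j + C) ^ L"
        using wprod_le[of t] by linarith
      then have "(max B 0 + C) ^ L < (frob dims (Wt t) j + C) ^ L"
        using dims_0_pos by (simp add: mult_less_cancel_left)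
      then have "max B 0 + C < frob dims (Wt t) j + C"
        by (rule power_less_imp_less_base) (use \<open>C \<ge> 0\<close> in \<open>auto simp: frob_eq_sqrt_fro2 fro2_nonneg\<close>)
      then show ?case by simp
    qed
  qed
qed

end

section \<open>Alignment\<close>

locale aligned_flow = separable_flow +
  fixes u v :: "real \<Rightarrow> nat \<Rightarrow> nat \<Rightarrow> real"
  assumes singvecs: "\<forall>t\<ge>0. \<forall>k\<in>{1..L}. top_sing_pair dims (Wt t) k (u t k) (v t k)"
begin

abbreviation "\<sigma> k t \<equiv> specnorm dims (Wt t) k"

lemma top_sing_pair_at: "t \<ge> 0 \<Longrightarrow> k \<in> {1..L} \<Longrightarrow> top_sing_pair dims (Wt t) k (u t k) (v t k)"
  using singvecs by blast

lemma u_unit: "t \<ge> 0 \<Longrightarrow> k \<in> {1..L} \<Longrightarrow> vnorm (dims k) (u t k) = 1"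
  using top_sing_pair_at unfolding top_sing_pair_def by blast

lemma v_unit: "t \<ge> 0 \<Longrightarrow> k \<in> {1..L} \<Longrightarrow> vnorm (dims (k - 1)) (v t k) = 1"
  using top_sing_pair_at unfolding top_sing_pair_def by blast

definition balance_norm :: "nat \<Rightarrow> real" where
  "balance_norm k = sqrt (\<Sum>b<dims k. \<Sum>c<dims k. (balance dims (Wt 0) k b c)\<^sup>2)"

lemma balance_quadratic_bound:
  assumes k: "1 \<le> k" "Suc k \<le> L" and t: "t \<ge> 0" and q: "vnorm (dims k) q = 1"
  shows "\<bar>(vnorm (dims (Suc k)) (layer_mv dims (Wt t) (Suc k) q))\<^sup>2
            - (vnorm (dims (k - 1)) (layer_tmv dims (Wt t) k q))\<^sup>2\<bar> \<le> balance_norm k"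
proof -
  have "(\<Sum>b<dims k. \<Sum>c<dims k. (balance dims (Wt t) k b c)\<^sup>2)
      = (\<Sum>b<dims k. \<Sum>c<dims k. (balance dims (Wt 0) k b c)\<^sup>2)"
    using balance_const[OF k _ _ t] by (intro sum.cong refl) auto
  then show ?thesis
    using balance_quadratic_form_bound[where dims = dims and k = k and q = q and W = "Wt t"] q
    unfolding balance_quadratic_form balance_norm_def by simp
qed

text \<open>Testing the conserved balance \<open>W\<^sub>k\<^sub>+\<^sub>1\<^sup>T W\<^sub>k\<^sub>+\<^sub>1 - W\<^sub>k W\<^sub>k\<^sup>T\<close> against \<open>v\<^sub>k\<^sub>+\<^sub>1\<close>
  shows that the top singular values of adjacent layers can differ only by a bounded amount.\<close>

lemma sigma_sq_step:
  assumes k: "1 \<le> k" "Suc k \<le> L" and t: "t \<ge> 0"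
  shows "(\<sigma> (Suc k) t)\<^sup>2 - balance_norm k \<le> (\<sigma> k t)\<^sup>2"
proof -
  have k1: "Suc k \<in> {1..L}" using k by auto
  have q: "vnorm (dims k) (v t (Suc k)) = 1" using v_unit[OF t k1] by simp
  have "vnorm (dims (k - 1)) (layer_tmv dims (Wt t) k (v t (Suc k))) \<le> \<sigma> k t"
    by (rule layer_tmv_norm_le_specnorm[where dims = dims and W = "Wt t", OF q])
  then have "(vnorm (dims (k - 1)) (layer_tmv dims (Wt t) k (v t (Suc k))))\<^sup>2 \<le> (\<sigma> k t)\<^sup>2"
    using vnorm_nonneg by (intro power_mono) auto
  then show ?thesis
    using balance_quadratic_bound[OF k t q] top_sing_pair_layer_mv_sqnorm[OF top_sing_pair_at[OF t k1]]
    by simp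
qed

definition tail :: "nat \<Rightarrow> real \<Rightarrow> real" where
  "tail k t = fro2 dims (Wt t) k - (\<sigma> k t)\<^sup>2"

lemma tail_nonneg: "tail k t \<ge> 0"
  using specnorm_sq_le_fro2 by (simp add: tail_def)

text \<open>Induction downwards from the last layer, which is a single row and hence has \<open>tail L = 0\<close>.\<close>

lemma tail_bounded: "k \<in> {1..L} \<Longrightarrow> \<exists>C. \<forall>t\<ge>0. tail k t \<le> C"
proof (induction "L - k" arbitrary: k)
  case 0
  then have "k = L" by auto
  then show ?case
    using fro2_eq_specnorm_sq_if_one_row[OF top_sing_pair_at dims_L] depth by (auto simp: tail_def)
next
  case (Suc d)
  then have k: "1 \<le> k" "Suc k \<le> L" by auto
  have "d = L - Suc k" using Suc.hyps(2) by arith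
  then obtain C where C: "\<forall>t\<ge>0. tail (Suc k) t \<le> C"
    using Suc.hyps(1) k by auto
  have "tail k t \<le> C + balance_norm k + \<bar>\<Sum>b<dims k. balance dims (Wt 0) k b b\<bar>" if t: "t \<ge> 0" for t
  proof -
    have "fro2 dims (Wt t) k = fro2 dims (Wt t) (Suc k) - (\<Sum>b<dims k. balance dims (Wt 0) k b b)"
      using fro2_Suc_diff[of dims "Wt t" k] balance_const[OF k _ _ t] by simp
    then show ?thesis
      using sigma_sq_step[OF k t] C t abs_ge_minus_self[of "\<Sum>b<dims k. balance dims (Wt 0) k b b"]
      unfolding tail_def by fastforce
  qed
  then show ?case by blast
qed

lemma fro2_tendsto_infinity: "k \<in> {1..L} \<Longrightarrow> filterlim (\<lambda>t. fro2 dims (Wt t) k) at_top at_top"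
  using filterlim_pow_at_top[of 2 "\<lambda>t. frob dims (Wt t) k", OF _ frob_tendsto_infinity]
  by (simp add: frob_eq_sqrt_fro2 fro2_nonneg)

lemma eventually_fro2_pos: "k \<in> {1..L} \<Longrightarrow> \<forall>\<^sub>F t in at_top. t \<ge> 0 \<and> fro2 dims (Wt t) k > 0"
  using eventually_conj[OF eventually_ge_at_top[of 0]
      fro2_tendsto_infinity[unfolded filterlim_at_top_dense, rule_format, of k 0]]
  by simp

lemma sigma_frob_ratio_tendsto_1: "k \<in> {1..L} \<Longrightarrow> ((\<lambda>t. \<sigma> k t / frob dims (Wt t) k) \<longlongrightarrow> 1) at_top"
proof -
  assume k: "k \<in> {1..L}"
  obtain C where C: "\<forall>t\<ge>0. tail k t \<le> C" using tail_bounded[OF k] by blast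
  show ?thesis
  proof (rule tendsto_sandwich[where f = "\<lambda>t. 1 - C / fro2 dims (Wt t) k" and h = "\<lambda>t. 1"])
    show "((\<lambda>t. 1 - C / fro2 dims (Wt t) k) \<longlongrightarrow> 1) at_top"
      using tendsto_diff[OF tendsto_const tendsto_divide_0[OF tendsto_const
          filterlim_at_top_imp_at_infinity[OF fro2_tendsto_infinity[OF k]]], of 1 C]
      by simp
    show "\<forall>\<^sub>F t in at_top. \<sigma> k t / frob dims (Wt t) k \<le> 1"
      using eventually_fro2_pos[OF k] by eventually_elim (use specnorm_le_frob in \<open>auto simp: frob_eq_sqrt_fro2\<close>)
    show "\<forall>\<^sub>F t in at_top. 1 - C / fro2 dims (Wt t) k \<le> \<sigma> k t / frob dims (Wt t) k"
      using eventually_fro2_pos[OF k]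
    proof eventually_elim
      case (elim t)
      let ?F = "frob dims (Wt t) k" and ?s = "\<sigma> k t"
      have F: "?F\<^sup>2 = fro2 dims (Wt t) k" "?F > 0" using elim by (simp_all add: frob_eq_sqrt_fro2)
      have ratio: "0 \<le> ?s / ?F" "?s / ?F \<le> 1"
        using specnorm_le_frob[of dims "Wt t" k] specnorm_nonneg F by (auto simp: frob_eq_sqrt_fro2)
      have "1 - C / fro2 dims (Wt t) k = (?F\<^sup>2 - C) / ?F\<^sup>2"
        using F elim by (simp add: diff_divide_distrib)
      also have "\<dots> \<le> ?s\<^sup>2 / ?F\<^sup>2"
        using C elim F by (intro divide_right_mono) (auto simp: tail_def)
      also have "\<dots> = (?s / ?F)\<^sup>2" by (simp add: power_divide)
      also have "\<dots> \<le> ?s / ?F"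
        using mult_right_le_one_le[OF ratio(1) ratio(1) ratio(2)] by (simp only: power2_eq_square)
      finally show ?case .
    qed
  qed simp
qed

lemma align_err_tendsto_0: "k \<in> {1..L} \<Longrightarrow> ((\<lambda>t. align_err dims (Wt t) k (u t k) (v t k)) \<longlongrightarrow> 0) at_top"
proof -
  assume k: "k \<in> {1..L}"
  have "((\<lambda>t. sqrt (2 - 2 * (\<sigma> k t / frob dims (Wt t) k))) \<longlongrightarrow> sqrt (2 - 2 * 1)) at_top"
    by (intro tendsto_intros sigma_frob_ratio_tendsto_1[OF k])
  then have lim: "((\<lambda>t. sqrt (2 - 2 * (\<sigma> k t / frob dims (Wt t) k))) \<longlongrightarrow> 0) at_top"
    by simp
  show ?thesis
  proof (rule Lim_transform_eventually[OF lim])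
    show "\<forall>\<^sub>F t in at_top. sqrt (2 - 2 * (\<sigma> k t / frob dims (Wt t) k)) = align_err dims (Wt t) k (u t k) (v t k)"
      using eventually_fro2_pos[OF k] by eventually_elim (use k in \<open>simp add: align_err_eq[OF top_sing_pair_at]\<close>)
  qed
qed

lemma sigma_sq_tendsto_infinity: "k \<in> {1..L} \<Longrightarrow> filterlim (\<lambda>t. (\<sigma> k t)\<^sup>2) at_top at_top"
proof -
  assume k: "k \<in> {1..L}"
  obtain C where C: "\<forall>t\<ge>0. tail k t \<le> C" using tail_bounded[OF k] by blast
  have "filterlim (\<lambda>t. - C + fro2 dims (Wt t) k) at_top at_top"
    by (rule filterlim_tendsto_add_at_top[OF tendsto_const fro2_tendsto_infinity[OF k]])
  then show ?thesis
  proof (rule filterlim_at_top_mono)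
    show "\<forall>\<^sub>F t in at_top. - C + fro2 dims (Wt t) k \<le> (\<sigma> k t)\<^sup>2"
      using eventually_ge_at_top[of 0] by eventually_elim (use C in \<open>auto simp: tail_def\<close>)
  qed
qed

lemma adjacent_align_le_1:
  "t \<ge> 0 \<Longrightarrow> k \<in> {1..<L} \<Longrightarrow> \<bar>vinner (dims k) (v t (Suc k)) (u t k)\<bar> \<le> 1"
  using vinner_abs_le[of "dims k" "v t (Suc k)" "u t k"] u_unit[of t k] v_unit[of t "Suc k"] by simp

text \<open>Applying \<open>W\<^sub>k\<^sub>+\<^sub>1\<close> to \<open>u\<^sub>k\<close>: balancedness gives \<open>\<parallel>W\<^sub>k\<^sub>+\<^sub>1 u\<^sub>k\<parallel>\<^sup>2 \<ge> \<sigma>\<^sub>k\<^sup>2 - const\<close>, while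
  the rank-one approximation of \<open>W\<^sub>k\<^sub>+\<^sub>1\<close> gives \<open>\<parallel>W\<^sub>k\<^sub>+\<^sub>1 u\<^sub>k\<parallel>\<^sup>2 \<le> \<sigma>\<^sub>k\<^sub>+\<^sub>1\<^sup>2 c\<^sup>2 + tail\<close>
  with \<open>c = \<langle>v\<^sub>k\<^sub>+\<^sub>1, u\<^sub>k\<rangle>\<close>.\<close>

lemma adjacent_align_gap:
  assumes k: "1 \<le> k" "Suc k \<le> L" and t: "t \<ge> 0" and C: "tail (Suc k) t \<le> C"
  shows "(\<sigma> (Suc k) t)\<^sup>2 * (1 - \<bar>vinner (dims k) (v t (Suc k)) (u t k)\<bar>) \<le> 2 * balance_norm k + C"
proof -
  let ?c = "vinner (dims k) (v t (Suc k)) (u t k)" and ?s = "\<sigma> (Suc k) t" and ?q = "u t k"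
  have k1: "Suc k \<in> {1..L}" "k \<in> {1..L}" using k by auto
  note tsp = top_sing_pair_at[OF t k1(1)]
  have q: "vnorm (dims k) ?q = 1" using u_unit[OF t k1(2)] .
  have c1: "\<bar>?c\<bar> \<le> 1" using adjacent_align_le_1[OF t] k by simp
  then have "\<bar>?c\<bar> * \<bar>?c\<bar> \<le> \<bar>?c\<bar>" by (intro mult_right_le_one_le) auto
  then have c2: "?c\<^sup>2 \<le> \<bar>?c\<bar>" by (simp add: power2_eq_square)
  have "0 \<le> C" using C tail_nonneg[of "Suc k" t] by linarith
  have "(\<sigma> k t)\<^sup>2 - balance_norm k \<le> (vnorm (dims (Suc k)) (layer_mv dims (Wt t) (Suc k) ?q))\<^sup>2"
    using balance_quadratic_bound[OF k t q] top_sing_pair_layer_tmv_sqnorm[OF top_sing_pair_at[OF t k1(2)]]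
    by linarith
  also have "\<dots> \<le> ?s\<^sup>2 * ?c\<^sup>2 + tail (Suc k) t * (1 - ?c\<^sup>2)"
    using layer_mv_sqnorm_decomp[OF tsp, of ?q] residual_sqnorm_le[OF tsp, of ?q] q
    by (simp add: tail_def)
  also have "\<dots> \<le> ?s\<^sup>2 * ?c\<^sup>2 + C * (1 - ?c\<^sup>2)"
    using C c1 c2 by (intro add_left_mono mult_right_mono) auto
  also have "\<dots> \<le> ?s\<^sup>2 * ?c\<^sup>2 + C"
    using \<open>0 \<le> C\<close> by (simp add: right_diff_distrib)
  finally have "?s\<^sup>2 * (1 - ?c\<^sup>2) \<le> 2 * balance_norm k + C"
    using sigma_sq_step[OF k t] by (simp add: right_diff_distrib)
  moreover have "?s\<^sup>2 * (1 - \<bar>?c\<bar>) \<le> ?s\<^sup>2 * (1 - ?c\<^sup>2)"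
    using c2 by (intro mult_left_mono) auto
  ultimately show ?thesis by linarith
qed

lemma adjacent_align_tendsto_1:
  assumes k: "1 \<le> k" "Suc k \<le> L"
  shows "((\<lambda>t. \<bar>vinner (dims k) (v t (Suc k)) (u t k)\<bar>) \<longlongrightarrow> 1) at_top"
proof -
  have k1: "Suc k \<in> {1..L}" using k by auto
  obtain C where C: "\<forall>t\<ge>0. tail (Suc k) t \<le> C" using tail_bounded[OF k1] by blast
  define D where "D = 2 * balance_norm k + C"
  show ?thesis
  proof (rule tendsto_sandwich[where f = "\<lambda>t. 1 - D / (\<sigma> (Suc k) t)\<^sup>2" and h = "\<lambda>t. 1"])
    show "((\<lambda>t. 1 - D / (\<sigma> (Suc k) t)\<^sup>2) \<longlongrightarrow> 1) at_top"
      using tendsto_diff[OF tendsto_const tendsto_divide_0[OF tendsto_const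
          filterlim_at_top_imp_at_infinity[OF sigma_sq_tendsto_infinity[OF k1]]], of 1 D]
      by simp
    show "\<forall>\<^sub>F t in at_top. \<bar>vinner (dims k) (v t (Suc k)) (u t k)\<bar> \<le> 1"
      using eventually_ge_at_top[of 0] by eventually_elim (use adjacent_align_le_1 k in auto)
    have "\<forall>\<^sub>F t in at_top. (\<sigma> (Suc k) t)\<^sup>2 > 0"
      using sigma_sq_tendsto_infinity[OF k1] unfolding filterlim_at_top_dense by blast
    then show "\<forall>\<^sub>F t in at_top. 1 - D / (\<sigma> (Suc k) t)\<^sup>2 \<le> \<bar>vinner (dims k) (v t (Suc k)) (u t k)\<bar>"
      using eventually_ge_at_top[of 0]
    proof eventually_elim
      case (elim t)
      then have "(\<sigma> (Suc k) t)\<^sup>2 * (1 - \<bar>vinner (dims k) (v t (Suc k)) (u t k)\<bar>) \<le> D"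
        using adjacent_align_gap[OF k _ C[rule_format]] unfolding D_def by blast
      then have "1 - \<bar>vinner (dims k) (v t (Suc k)) (u t k)\<bar> \<le> D / (\<sigma> (Suc k) t)\<^sup>2"
        using elim by (simp add: le_divide_eq mult.commute)
      then show ?case by simp
    qed
  qed simp
qed

text \<open>\<open>prop_vec m t\<close> is \<open>y\<^sub>m = W\<^sub>m \<cdots> W\<^sub>1 v\<^sub>1 / \<Prod>\<^sub>k\<^sub>\<le>\<^sub>m \<parallel>W\<^sub>k\<parallel>\<^sub>F\<close>. Layer by layer, \<open>y\<^sub>m\<close> becomes
  a unit vector parallel to \<open>u\<^sub>m\<close>: \<open>u\<^sub>m\<close> is nearly parallel to \<open>v\<^sub>m\<^sub>+\<^sub>1\<close>, the direction that
  \<open>W\<^sub>m\<^sub>+\<^sub>1\<close> stretches by almost \<open>\<parallel>W\<^sub>m\<^sub>+\<^sub>1\<parallel>\<^sub>F\<close>. For \<open>m = L\<close> the scalar \<open>y\<^sub>L\<close> is the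
  normalized \<open>\<langle>w\<^sub>p\<^sub>r\<^sub>o\<^sub>d, v\<^sub>1\<rangle>\<close>.\<close>

definition prop_vec :: "nat \<Rightarrow> real \<Rightarrow> nat \<Rightarrow> real" where
  "prop_vec m t i = (\<Sum>j<dims 0. prodmat dims (Wt t) m i j * v t 1 j) / (\<Prod>k\<in>{1..m}. frob dims (Wt t) k)"

definition prop_sqnorm :: "nat \<Rightarrow> real \<Rightarrow> real" where
  "prop_sqnorm m t = (\<Sum>i<dims m. (prop_vec m t i)\<^sup>2)"

definition prop_align :: "nat \<Rightarrow> real \<Rightarrow> real" where
  "prop_align m t = vinner (dims m) (u t m) (prop_vec m t)"

lemma prop_vec_Suc:
  "prop_vec (Suc m) t i = layer_mv dims (Wt t) (Suc m) (prop_vec m t) i / frob dims (Wt t) (Suc m)"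
proof -
  have "(\<Sum>j<dims 0. prodmat dims (Wt t) (Suc m) i j * v t 1 j)
      = (\<Sum>c<dims m. Wt t (Suc m) i c * (\<Sum>j<dims 0. prodmat dims (Wt t) m c j * v t 1 j))"
    by (simp add: sum_distrib_left sum_distrib_right mult.assoc sum.swap[of _ "{..<dims m}"])
  then show ?thesis
    unfolding prop_vec_def layer_mv_def
    by (simp add: prod.nat_ivl_Suc' sum_divide_distrib[symmetric])
qed

lemma prop_vec_1: "t \<ge> 0 \<Longrightarrow> i < dims 1 \<Longrightarrow> prop_vec 1 t i = \<sigma> 1 t * u t 1 i / frob dims (Wt t) 1"
proof -
  assume t: "t \<ge> 0" and i: "i < dims 1"
  have "(\<Sum>j<dims 0. prodmat dims (Wt t) 1 i j * v t 1 j) = layer_mv dims (Wt t) 1 (v t 1) i"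
    unfolding layer_mv_def by (intro sum.cong) (simp_all del: prodmat.simps add: prodmat_Suc_0)
  also have "\<dots> = \<sigma> 1 t * u t 1 i"
    using top_sing_pairD(3)[OF top_sing_pair_at[OF t] i] depth by simp
  finally show ?thesis unfolding prop_vec_def by simp
qed

lemma prop_gap_eq:
  assumes "t \<ge> 0" "m \<in> {1..L}"
  shows "prop_sqnorm m t - (prop_align m t)\<^sup>2
           = (vnorm (dims m) (\<lambda>i. prop_vec m t i - prop_align m t * u t m i))\<^sup>2"
proof -
  have "(vnorm (dims m) (\<lambda>i. prop_vec m t i - prop_align m t * u t m i))\<^sup>2
      = prop_sqnorm m t - 2 * prop_align m t * (\<Sum>i<dims m. u t m i * prop_vec m t i)
        + (prop_align m t)\<^sup>2 * (\<Sum>i<dims m. (u t m i)\<^sup>2)"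
    unfolding vnorm_sq prop_sqnorm_def
    by (simp add: power2_eq_square algebra_simps sum_subtractf sum.distrib sum_distrib_left)
  then show ?thesis
    using top_sing_pairD(1)[OF top_sing_pair_at[OF assms]]
    by (simp add: prop_align_def vinner_def power2_eq_square)
qed

lemma prop_tendsto_base:
  "((\<lambda>t. prop_sqnorm 1 t - (prop_align 1 t)\<^sup>2) \<longlongrightarrow> 0) at_top
   \<and> ((\<lambda>t. (prop_align 1 t)\<^sup>2) \<longlongrightarrow> 1) at_top"
proof -
  have k1: "1 \<in> {1..L}" using depth by auto
  have ev: "\<forall>\<^sub>F t in at_top. prop_sqnorm 1 t = (\<sigma> 1 t / frob dims (Wt t) 1)\<^sup>2
      \<and> prop_align 1 t = \<sigma> 1 t / frob dims (Wt t) 1"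
    using eventually_ge_at_top[of 0]
  proof eventually_elim
    case (elim t)
    have "prop_sqnorm 1 t = (\<sigma> 1 t / frob dims (Wt t) 1)\<^sup>2 * (\<Sum>i<dims 1. (u t 1 i)\<^sup>2)"
      unfolding prop_sqnorm_def sum_distrib_left using prop_vec_1[OF elim]
      by (intro sum.cong refl) (simp add: power_divide power_mult_distrib)
    moreover have "prop_align 1 t = (\<sigma> 1 t / frob dims (Wt t) 1) * (\<Sum>i<dims 1. (u t 1 i)\<^sup>2)"
      unfolding prop_align_def vinner_def sum_distrib_left using prop_vec_1[OF elim]
      by (intro sum.cong refl) (simp add: power2_eq_square)
    ultimately show ?case using top_sing_pairD(1)[OF top_sing_pair_at[OF elim k1]] by simp
  qed
  have "((\<lambda>t. (\<sigma> 1 t / frob dims (Wt t) 1)\<^sup>2) \<longlongrightarrow> 1) at_top"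
    using tendsto_power[OF sigma_frob_ratio_tendsto_1[OF k1], of 2] by simp
  then have "((\<lambda>t. (prop_align 1 t)\<^sup>2) \<longlongrightarrow> 1) at_top"
    by (rule Lim_transform_eventually) (use ev in \<open>auto elim: eventually_mono\<close>)
  moreover have "((\<lambda>t. prop_sqnorm 1 t - (prop_align 1 t)\<^sup>2) \<longlongrightarrow> 0) at_top"
    by (rule Lim_transform_eventually[OF tendsto_const[of 0]]) (use ev in \<open>auto elim: eventually_mono\<close>)
  ultimately show ?thesis by simp
qed

lemma prop_align_Suc:
  assumes t: "t \<ge> 0" and m: "Suc m \<in> {1..L}"
  shows "prop_align (Suc m) t
           = \<sigma> (Suc m) t * vinner (dims m) (v t (Suc m)) (prop_vec m t) / frob dims (Wt t) (Suc m)"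
proof -
  note tsp = top_sing_pair_at[OF t m]
  let ?q = "prop_vec m t" and ?c = "vinner (dims m) (v t (Suc m)) (prop_vec m t)"
  have mv: "layer_mv dims (Wt t) (Suc m) ?q i
      = residual dims (Wt t) (Suc m) (u t (Suc m)) (v t (Suc m)) ?q i + \<sigma> (Suc m) t * u t (Suc m) i * ?c" for i
    by (simp add: residual_def)
  have "(\<Sum>i<dims (Suc m). u t (Suc m) i * layer_mv dims (Wt t) (Suc m) ?q i)
      = (\<Sum>i<dims (Suc m). u t (Suc m) i * residual dims (Wt t) (Suc m) (u t (Suc m)) (v t (Suc m)) ?q i)
        + \<sigma> (Suc m) t * ?c * (\<Sum>i<dims (Suc m). (u t (Suc m) i)\<^sup>2)"
    unfolding mv by (simp add: algebra_simps sum.distrib sum_distrib_left power2_eq_square)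
  also have "\<dots> = \<sigma> (Suc m) t * ?c"
    using residual_orthogonal[OF tsp] top_sing_pairD(1)[OF tsp] by simp
  finally show ?thesis
    unfolding prop_align_def vinner_def prop_vec_Suc by (simp add: sum_divide_distrib[symmetric])
qed

lemma prop_gap_Suc:
  assumes t: "t \<ge> 0" and m: "Suc m \<in> {1..L}" and C: "tail (Suc m) t \<le> C"
  shows "0 \<le> prop_sqnorm (Suc m) t - (prop_align (Suc m) t)\<^sup>2"
    and "prop_sqnorm (Suc m) t - (prop_align (Suc m) t)\<^sup>2
           \<le> C * prop_sqnorm m t / (frob dims (Wt t) (Suc m))\<^sup>2"
proof -
  note tsp = top_sing_pair_at[OF t m]
  let ?q = "prop_vec m t" and ?c = "vinner (dims m) (v t (Suc m)) (prop_vec m t)"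
    and ?F = "frob dims (Wt t) (Suc m)"
  define E where "E = (\<Sum>i<dims (Suc m). (residual dims (Wt t) (Suc m) (u t (Suc m)) (v t (Suc m)) ?q i)\<^sup>2)"
  have "prop_sqnorm (Suc m) t = (vnorm (dims (Suc m)) (layer_mv dims (Wt t) (Suc m) ?q))\<^sup>2 / ?F\<^sup>2"
    unfolding prop_sqnorm_def prop_vec_Suc vnorm_sq by (simp add: power_divide sum_divide_distrib)
  then have gap: "prop_sqnorm (Suc m) t - (prop_align (Suc m) t)\<^sup>2 = E / ?F\<^sup>2"
    using layer_mv_sqnorm_decomp[OF tsp, of ?q] prop_align_Suc[OF t m]
    by (simp add: E_def power_divide power_mult_distrib diff_divide_distrib[symmetric])
  then show "0 \<le> prop_sqnorm (Suc m) t - (prop_align (Suc m) t)\<^sup>2"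
    by (simp add: E_def sum_nonneg)
  have "0 \<le> C" using C tail_nonneg[of "Suc m" t] by linarith
  have "\<bar>?c\<bar> \<le> vnorm (dims m) ?q"
    using vinner_abs_le[of "dims m" "v t (Suc m)" ?q] v_unit[OF t m] by simp
  then have c: "?c\<^sup>2 \<le> (vnorm (dims m) ?q)\<^sup>2"
    by (metis abs_le_square_iff abs_of_nonneg vnorm_nonneg)
  have "E \<le> tail (Suc m) t * ((vnorm (dims m) ?q)\<^sup>2 - ?c\<^sup>2)"
    using residual_sqnorm_le[OF tsp, of ?q] by (simp add: E_def tail_def)
  also have "\<dots> \<le> C * ((vnorm (dims m) ?q)\<^sup>2 - ?c\<^sup>2)"
    using C c by (intro mult_right_mono) auto
  also have "\<dots> \<le> C * (vnorm (dims m) ?q)\<^sup>2"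
    using \<open>0 \<le> C\<close> by (intro mult_left_mono) auto
  finally show "prop_sqnorm (Suc m) t - (prop_align (Suc m) t)\<^sup>2 \<le> C * prop_sqnorm m t / ?F\<^sup>2"
    unfolding gap by (simp add: prop_sqnorm_def vnorm_sq divide_right_mono)
qed

text \<open>Split \<open>\<langle>v\<^sub>m\<^sub>+\<^sub>1, y\<^sub>m\<rangle>\<close> along \<open>y\<^sub>m = \<langle>u\<^sub>m, y\<^sub>m\<rangle> u\<^sub>m + r\<close>: the first part tends to \<open>\<plusminus>1\<close>
  by adjacent alignment, and \<open>\<parallel>r\<parallel>\<^sup>2\<close> is the gap, which tends to \<open>0\<close>.\<close>

lemma vinner_v_prop_tendsto:
  assumes m: "1 \<le> m" "Suc m \<le> L"
    and gap: "((\<lambda>t. prop_sqnorm m t - (prop_align m t)\<^sup>2) \<longlongrightarrow> 0) at_top"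
    and align: "((\<lambda>t. (prop_align m t)\<^sup>2) \<longlongrightarrow> 1) at_top"
  shows "((\<lambda>t. (vinner (dims m) (v t (Suc m)) (prop_vec m t))\<^sup>2) \<longlongrightarrow> 1) at_top"
proof -
  have k1: "Suc m \<in> {1..L}" "m \<in> {1..L}" using m by auto
  define X where "X t = prop_align m t * vinner (dims m) (v t (Suc m)) (u t m)" for t
  define Y where "Y t = vinner (dims m) (v t (Suc m)) (\<lambda>i. prop_vec m t i - prop_align m t * u t m i)" for t
  have XY: "vinner (dims m) (v t (Suc m)) (prop_vec m t) = X t + Y t" for t
    unfolding X_def Y_def vinner_def by (simp add: algebra_simps sum_subtractf sum_distrib_left)
  have "(Y t)\<^sup>2 \<le> prop_sqnorm m t - (prop_align m t)\<^sup>2" if "t \<ge> 0" for t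
  proof -
    have "\<bar>Y t\<bar> \<le> vnorm (dims m) (\<lambda>i. prop_vec m t i - prop_align m t * u t m i)"
      using vinner_abs_le[of "dims m" "v t (Suc m)"] v_unit[OF that k1(1)] unfolding Y_def by simp
    then show ?thesis
      unfolding prop_gap_eq[OF that k1(2)] by (metis abs_le_square_iff abs_of_nonneg vnorm_nonneg)
  qed
  then have Y2: "((\<lambda>t. (Y t)\<^sup>2) \<longlongrightarrow> 0) at_top"
    by (intro tendsto_sandwich[where f = "\<lambda>t. 0", OF _ _ tendsto_const gap])
       (auto simp: eventually_at_top_linorder intro!: exI[of _ 0])
  then have Y: "((\<lambda>t. \<bar>Y t\<bar>) \<longlongrightarrow> 0) at_top"
    using tendsto_real_sqrt[OF Y2] by simp
  have "((\<lambda>t. \<bar>prop_align m t\<bar> * \<bar>vinner (dims m) (v t (Suc m)) (u t m)\<bar>) \<longlongrightarrow> 1 * 1) at_top"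
    using tendsto_mult[OF tendsto_real_sqrt[OF align] adjacent_align_tendsto_1[OF m]] by simp
  then have X: "((\<lambda>t. \<bar>X t\<bar>) \<longlongrightarrow> 1) at_top"
    by (simp add: X_def abs_mult)
  have "((\<lambda>t. \<bar>X t * Y t\<bar>) \<longlongrightarrow> 1 * 0) at_top"
    using tendsto_mult[OF X Y] by (simp add: abs_mult)
  then have XY0: "((\<lambda>t. X t * Y t) \<longlongrightarrow> 0) at_top"
    by (simp add: tendsto_rabs_zero_iff)
  have "((\<lambda>t. (X t)\<^sup>2 + 2 * (X t * Y t) + (Y t)\<^sup>2) \<longlongrightarrow> 1 + 2 * 0 + 0) at_top"
    using tendsto_power[OF X, of 2] by (intro tendsto_add tendsto_mult XY0 Y2 tendsto_const) simp_all
  then show ?thesis unfolding XY by (simp add: power2_eq_square algebra_simps)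
qed

lemma prop_tendsto_Suc:
  assumes m: "1 \<le> m" "Suc m \<le> L"
    and gap: "((\<lambda>t. prop_sqnorm m t - (prop_align m t)\<^sup>2) \<longlongrightarrow> 0) at_top"
    and align: "((\<lambda>t. (prop_align m t)\<^sup>2) \<longlongrightarrow> 1) at_top"
  shows "((\<lambda>t. prop_sqnorm (Suc m) t - (prop_align (Suc m) t)\<^sup>2) \<longlongrightarrow> 0) at_top
         \<and> ((\<lambda>t. (prop_align (Suc m) t)\<^sup>2) \<longlongrightarrow> 1) at_top"
proof
  have k1: "Suc m \<in> {1..L}" using m by auto
  obtain C where C: "\<forall>t\<ge>0. tail (Suc m) t \<le> C" using tail_bounded[OF k1] by blast
  have sqnorm: "((\<lambda>t. prop_sqnorm m t) \<longlongrightarrow> 1) at_top"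
    using tendsto_add[OF gap align] by simp
  have "filterlim (\<lambda>t. (frob dims (Wt t) (Suc m))\<^sup>2) at_infinity at_top"
    using fro2_tendsto_infinity[OF k1] fro2_nonneg
    by (simp add: frob_eq_sqrt_fro2 filterlim_at_top_imp_at_infinity)
  then have "((\<lambda>t. C * prop_sqnorm m t / (frob dims (Wt t) (Suc m))\<^sup>2) \<longlongrightarrow> 0) at_top"
    by (rule tendsto_divide_0[OF tendsto_mult[OF tendsto_const sqnorm]])
  then show "((\<lambda>t. prop_sqnorm (Suc m) t - (prop_align (Suc m) t)\<^sup>2) \<longlongrightarrow> 0) at_top"
    by (rule tendsto_sandwich[where f = "\<lambda>t. 0", OF _ _ tendsto_const, rotated 2])
       (use prop_gap_Suc[OF _ k1 C[rule_format]] in \<open>auto simp: eventually_at_top_linorder intro!: exI[of _ 0]\<close>)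
  have "((\<lambda>t. (\<sigma> (Suc m) t / frob dims (Wt t) (Suc m))\<^sup>2
             * (vinner (dims m) (v t (Suc m)) (prop_vec m t))\<^sup>2) \<longlongrightarrow> 1 * 1) at_top"
    using tendsto_power[OF sigma_frob_ratio_tendsto_1[OF k1], of 2]
    by (intro tendsto_mult vinner_v_prop_tendsto[OF m gap align]) simp
  then have lim: "((\<lambda>t. (\<sigma> (Suc m) t / frob dims (Wt t) (Suc m))\<^sup>2
             * (vinner (dims m) (v t (Suc m)) (prop_vec m t))\<^sup>2) \<longlongrightarrow> 1) at_top"
    by simp
  show "((\<lambda>t. (prop_align (Suc m) t)\<^sup>2) \<longlongrightarrow> 1) at_top"
  proof (rule Lim_transform_eventually[OF lim])
    show "\<forall>\<^sub>F t in at_top. (\<sigma> (Suc m) t / frob dims (Wt t) (Suc m))\<^sup>2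
             * (vinner (dims m) (v t (Suc m)) (prop_vec m t))\<^sup>2 = (prop_align (Suc m) t)\<^sup>2"
      using eventually_ge_at_top[of 0]
      by eventually_elim (simp add: prop_align_Suc[OF _ k1] power_divide power_mult_distrib)
  qed
qed

lemma prop_tendsto:
  "m \<in> {1..L} \<Longrightarrow>
   ((\<lambda>t. prop_sqnorm m t - (prop_align m t)\<^sup>2) \<longlongrightarrow> 0) at_top
   \<and> ((\<lambda>t. (prop_align m t)\<^sup>2) \<longlongrightarrow> 1) at_top"
proof (induction m)
  case (Suc m)
  then show ?case
    using prop_tendsto_base prop_tendsto_Suc[of m] by (cases "m = 0") auto
qed simp

lemma wprod_align_tendsto_1:
  "((\<lambda>t. \<bar>vinner (dims 0) (\<lambda>j. wprod dims L (Wt t) j / (\<Prod>k\<in>{1..L}. frob dims (Wt t) k)) (v t 1)\<bar>)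
     \<longlongrightarrow> 1) at_top"
proof -
  have L: "L \<in> {1..L}" using depth by auto
  have eq: "vinner (dims 0) (\<lambda>j. wprod dims L (Wt t) j / (\<Prod>k\<in>{1..L}. frob dims (Wt t) k)) (v t 1)
      = prop_vec L t 0" for t
    unfolding vinner_def prop_vec_def wprod_def by (simp add: sum_divide_distrib)
  have "\<forall>\<^sub>F t in at_top. (prop_align L t)\<^sup>2 = (prop_vec L t 0)\<^sup>2"
    using eventually_ge_at_top[of 0]
  proof eventually_elim
    case (elim t)
    have "(u t L 0)\<^sup>2 = 1" using top_sing_pairD(1)[OF top_sing_pair_at[OF elim L]] dims_L by simp
    then show ?case using dims_L by (simp add: prop_align_def vinner_def power_mult_distrib)
  qed
  with prop_tendsto[OF L] have "((\<lambda>t. (prop_vec L t 0)\<^sup>2) \<longlongrightarrow> 1) at_top"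
    by (auto intro: Lim_transform_eventually)
  from tendsto_real_sqrt[OF this] show ?thesis unfolding eq by simp
qed

end

theorem mainTheorem1:
  fixes n L :: nat and dims :: "nat \<Rightarrow> nat"
    and x :: "nat \<Rightarrow> nat \<Rightarrow> real" and y :: "nat \<Rightarrow> real"
    and loss :: "real \<Rightarrow> real"
    and Wt :: "real \<Rightarrow> net"
    and u v :: "real \<Rightarrow> nat \<Rightarrow> nat \<Rightarrow> real"
  assumes L2: "L \<ge> 2"
    and dimL: "dims L = 1"
    and labels: "\<forall>i<n. y i = -1 \<or> y i = 1"
    and xbound: "\<forall>i<n. vnorm (dims 0) (x i) \<le> 1"
    and separable: "\<exists>w. vnorm (dims 0) w = 1 \<and> (\<forall>i<n. vinner (dims 0) w (zvec x y i) > 0)"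
    and loss_diff: "\<forall>s. loss differentiable (at s)"
    and loss_C1: "continuous_on UNIV (deriv loss)"
    and loss_dec: "\<forall>s. deriv loss s < 0"
    and loss_bot: "filterlim loss at_top at_bot"
    and loss_top: "(loss \<longlongrightarrow> 0) at_top"
    and flow: "\<forall>t\<ge>0. \<forall>k\<in>{1..L}. \<forall>i<dims k. \<forall>j<dims (k - 1).
                 ((\<lambda>s. Wt s k i j) has_real_derivative
                    - grad_entry (risk loss n x y dims L) (Wt t) k i j) (at t within {0..})"
    and flow_C1: "\<forall>k\<in>{1..L}. \<forall>i<dims k. \<forall>j<dims (k - 1).
                 continuous_on {0..} (\<lambda>t. grad_entry (risk loss n x y dims L) (Wt t) k i j)"
    and init_grad: "\<exists>k\<in>{1..L}. \<exists>i<dims k. \<exists>j<dims (k - 1).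
                 grad_entry (risk loss n x y dims L) (Wt 0) k i j \<noteq> 0"
    and init_risk: "risk loss n x y dims L (Wt 0) \<le> loss 0"
    and singvecs: "\<forall>t\<ge>0. \<forall>k\<in>{1..L}. top_sing_pair dims (Wt t) k (u t k) (v t k)"
  shows "((\<lambda>t. risk loss n x y dims L (Wt t)) \<longlongrightarrow> 0) at_top
    \<and> (\<forall>k\<in>{1..L}. filterlim (\<lambda>t. frob dims (Wt t) k) at_top at_top)
    \<and> (\<forall>k\<in>{1..L}. ((\<lambda>t. align_err dims (Wt t) k (u t k) (v t k)) \<longlongrightarrow> 0) at_top)
    \<and> (\<forall>k\<in>{1..<L}. ((\<lambda>t. \<bar>vinner (dims k) (v t (k + 1)) (u t k)\<bar>) \<longlongrightarrow> 1) at_top)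
    \<and> ((\<lambda>t. \<bar>vinner (dims 0)
              (\<lambda>j. wprod dims L (Wt t) j / (\<Prod>k\<in>{1..L}. frob dims (Wt t) k)) (v t 1)\<bar>)
         \<longlongrightarrow> 1) at_top
    \<and> filterlim (\<lambda>t. vnorm (dims 0) (wprod dims L (Wt t))) at_top at_top"
proof -
  interpret aligned_flow n L dims x y loss Wt u v
    by unfold_locales (use assms in auto)
  show ?thesis
    using risk_tendsto_0 frob_tendsto_infinity align_err_tendsto_0 adjacent_align_tendsto_1
      wprod_align_tendsto_1 wprod_norm_tendsto_infinity
    by auto
qed
end
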